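(* Under the standing assumptions, let $v$ be a vertex of degree $8$ in $G$. If there is a vertex $w$ of degree $3$ such that the edge $vw$ lies on two $3$-faces, then $v$ has no neighbour of degree $2$.
   Context: Standing assumptions: A total $9$-coloring of a graph is an assignment of colors from $\{1,\dots,9\}$ to the vertices and edges such that adjacent vertices, edges sharing an endpoint, and a vertex and an incident edge receive different colors. A $4$-fan is the graph on six vertices $c,u_1,\dots,u_5$ with edges $cu_j$ ($1\le j\le5$) and $u_ju_{j+1}$ ($1\le j\le4$). $G$ is a minimal counterexample: $G$ is a simple planar graph with maximum degree $8$, containing no subgraph isomorphic to a $4$-fan, that has no total $9$-coloring, and such that every simple planar graph $H$ with maximum degree at most $8$, no subgraph isomorphic to a $4$-fan, and $|V(H)|+|E(H)|<|V(G)|+|E(G)|$ has a total $9$-coloring. $G$ is considered with a fixed plane embedding; a $3$-face is a face of length $3$. *)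

theory Defs
  imports Main
begin

definition simple_graph :: "'a set \<Rightarrow> 'a set set \<Rightarrow> bool" where
  "simple_graph V E \<longleftrightarrow> finite V \<and>
     (\<forall>e\<in>E. \<exists>x y. e = {x, y} \<and> x \<noteq> y \<and> x \<in> V \<and> y \<in> V)"

definition neighbours :: "'a set \<Rightarrow> 'a set set \<Rightarrow> 'a \<Rightarrow> 'a set" where
  "neighbours V E v = {u \<in> V. u \<noteq> v \<and> {u, v} \<in> E}"

definition degree :: "'a set \<Rightarrow> 'a set set \<Rightarrow> 'a \<Rightarrow> nat" where
  "degree V E v = card (neighbours V E v)"

definition max_degree_le :: "'a set \<Rightarrow> 'a set set \<Rightarrow> nat \<Rightarrow> bool" where
  "max_degree_le V E k \<longleftrightarrow> (\<forall>v\<in>V. degree V E v \<le> k)"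

definition max_degree_eq :: "'a set \<Rightarrow> 'a set set \<Rightarrow> nat \<Rightarrow> bool" where
  "max_degree_eq V E k \<longleftrightarrow> max_degree_le V E k \<and> (\<exists>v\<in>V. degree V E v = k)"

definition total_colouring ::
  "'a set \<Rightarrow> 'a set set \<Rightarrow> nat \<Rightarrow> ('a \<Rightarrow> nat) \<Rightarrow> ('a set \<Rightarrow> nat) \<Rightarrow> bool" where
  "total_colouring V E k cv ce \<longleftrightarrow>
     (\<forall>v\<in>V. cv v \<in> {1..k}) \<and> (\<forall>e\<in>E. ce e \<in> {1..k}) \<and>
     (\<forall>x\<in>V. \<forall>y\<in>V. x \<noteq> y \<and> {x, y} \<in> E \<longrightarrow> cv x \<noteq> cv y) \<and>
     (\<forall>e\<in>E. \<forall>e'\<in>E. e \<noteq> e' \<and> e \<inter> e' \<noteq> {} \<longrightarrow> ce e \<noteq> ce e') \<and>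
     (\<forall>e\<in>E. \<forall>v\<in>e. cv v \<noteq> ce e)"

definition total_colourable :: "'a set \<Rightarrow> 'a set set \<Rightarrow> nat \<Rightarrow> bool" where
  "total_colourable V E k \<longleftrightarrow> (\<exists>cv ce. total_colouring V E k cv ce)"

definition has_4fan :: "'a set \<Rightarrow> 'a set set \<Rightarrow> bool" where
  "has_4fan V E \<longleftrightarrow> (\<exists>c u1 u2 u3 u4 u5.
     {c, u1, u2, u3, u4, u5} \<subseteq> V \<and> distinct [c, u1, u2, u3, u4, u5] \<and>
     {c, u1} \<in> E \<and> {c, u2} \<in> E \<and> {c, u3} \<in> E \<and> {c, u4} \<in> E \<and> {c, u5} \<in> E \<and>
     {u1, u2} \<in> E \<and> {u2, u3} \<in> E \<and> {u3, u4} \<in> E \<and> {u4, u5} \<in> E)"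

text \<open>A combinatorial embedding (rotation system): at every vertex v, rot v is a cyclic
  permutation of the neighbours of v (the clockwise order of edges around v).\<close>

definition rotation_system :: "'a set \<Rightarrow> 'a set set \<Rightarrow> ('a \<Rightarrow> 'a \<Rightarrow> 'a) \<Rightarrow> bool" where
  "rotation_system V E rot \<longleftrightarrow> (\<forall>v\<in>V.
     (\<forall>x\<in>neighbours V E v. rot v x \<in> neighbours V E v) \<and>
     inj_on (rot v) (neighbours V E v) \<and>
     (\<forall>x\<in>neighbours V E v. \<forall>y\<in>neighbours V E v. \<exists>n. (rot v ^^ n) x = y))"

definition darts :: "'a set \<Rightarrow> 'a set set \<Rightarrow> ('a \<times> 'a) set" where
  "darts V E = {(x, y). x \<in> V \<and> y \<in> V \<and> x \<noteq> y \<and> {x, y} \<in> E}"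

definition face_step :: "('a \<Rightarrow> 'a \<Rightarrow> 'a) \<Rightarrow> 'a \<times> 'a \<Rightarrow> 'a \<times> 'a" where
  "face_step rot d = (snd d, rot (snd d) (fst d))"

definition face :: "('a \<Rightarrow> 'a \<Rightarrow> 'a) \<Rightarrow> 'a \<times> 'a \<Rightarrow> ('a \<times> 'a) set" where
  "face rot d = {(face_step rot ^^ n) d | n. True}"

text \<open>Faces are the orbits of face tracing on the darts; the length of a face is the number
  of darts in it.\<close>

definition faces :: "'a set \<Rightarrow> 'a set set \<Rightarrow> ('a \<Rightarrow> 'a \<Rightarrow> 'a) \<Rightarrow> ('a \<times> 'a) set set" where
  "faces V E rot = face rot ` darts V E"

definition edge_on_face :: "'a \<Rightarrow> 'a \<Rightarrow> ('a \<times> 'a) set \<Rightarrow> bool" where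
  "edge_on_face x y f \<longleftrightarrow> (x, y) \<in> f \<or> (y, x) \<in> f"

definition components :: "'a set \<Rightarrow> 'a set set \<Rightarrow> 'a set set" where
  "components V E = {{y \<in> V. (\<lambda>a b. {a, b} \<in> E)\<^sup>*\<^sup>* x y} | x. x \<in> V}"

definition isolated :: "'a set \<Rightarrow> 'a set set \<Rightarrow> 'a set" where
  "isolated V E = {v \<in> V. neighbours V E v = {}}"

text \<open>A rotation system is a plane embedding iff every component has Euler genus 0, i.e.
  V - E + F = 2 per component (isolated vertices counting as one face each).\<close>

definition plane_rotation :: "'a set \<Rightarrow> 'a set set \<Rightarrow> ('a \<Rightarrow> 'a \<Rightarrow> 'a) \<Rightarrow> bool" where
  "plane_rotation V E rot \<longleftrightarrow> rotation_system V E rot \<and>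
     int (card V) - int (card E) + int (card (faces V E rot)) + int (card (isolated V E))
       = 2 * int (card (components V E))"

definition planar :: "'a set \<Rightarrow> 'a set set \<Rightarrow> bool" where
  "planar V E \<longleftrightarrow> (\<exists>rot. plane_rotation V E rot)"

definition minimal_counterexample :: "'a set \<Rightarrow> 'a set set \<Rightarrow> bool" where
  "minimal_counterexample V E \<longleftrightarrow>
     simple_graph V E \<and> planar V E \<and> max_degree_eq V E 8 \<and> \<not> has_4fan V E \<and>
     \<not> total_colourable V E 9 \<and>
     (\<forall>(VH :: nat set) EH. simple_graph VH EH \<and> planar VH EH \<and> max_degree_le VH EH 8 \<and>
        \<not> has_4fan VH EH \<and> card VH + card EH < card V + card E \<longrightarrow> total_colourable VH EH 9)"

end

theory Submission
  imports Defs "HOL-Combinatorics.Orbits"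
begin

section \<open>Orbits of an injective self-map of a finite set\<close>

lemma funpow_funpow: "(f ^^ m) ((f ^^ n) x) = (f ^^ (m + n)) x"
  by (simp add: funpow_add)

locale finite_injection =
  fixes D :: "'b set" and s :: "'b \<Rightarrow> 'b"
  assumes finite_domain: "finite D" and maps_to: "\<And>d. d \<in> D \<Longrightarrow> s d \<in> D"
    and inj: "inj_on s D"
begin

lemma funpow_in: "d \<in> D \<Longrightarrow> (s ^^ n) d \<in> D"
  by (induction n) (auto intro: maps_to)

lemma inj_on_funpow: "inj_on (s ^^ n) D"
proof (induction n)
  case (Suc n)
  have "inj_on s ((s ^^ n) ` D)"
    by (rule inj_on_subset[OF inj]) (auto intro: funpow_in)
  with Suc.IH have "inj_on (s \<circ> (s ^^ n)) D" by (rule comp_inj_on)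
  then show ?case by (simp add: comp_def)
qed simp

lemma self_in_orbit:
  assumes "d \<in> D" shows "d \<in> orbit s d"
proof -
  have "\<not> inj_on (\<lambda>n. (s ^^ n) d) {..card D}"
  proof
    assume "inj_on (\<lambda>n. (s ^^ n) d) {..card D}"
    then have "card {..card D} \<le> card D"
      using card_inj_on_le finite_domain funpow_in assms by blast
    then show False by simp
  qed
  then obtain i j where ij: "i < j" "(s ^^ i) d = (s ^^ j) d"
    unfolding inj_on_def by (metis linorder_neqE_nat)
  then have "(s ^^ i) ((s ^^ (j - i)) d) = (s ^^ i) d"
    by (simp add: funpow_funpow)
  then have "(s ^^ (j - i)) d = d"
    using inj_on_funpow[of i] funpow_in assms by (meson inj_onD)
  with ij(1) show ?thesis
    unfolding orbit_altdef by (intro CollectI exI[of _ "j - i"]) simp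
qed

lemma orbit_subset: "d \<in> D \<Longrightarrow> orbit s d \<subseteq> D"
  unfolding orbit_altdef by (auto intro: funpow_in)

lemma orbit_eq:
  assumes "d \<in> D" "e \<in> orbit s d" shows "orbit s e = orbit s d"
proof -
  have "d \<in> orbit s e" using orbit_swap[OF self_in_orbit[OF assms(1)] assms(2)] .
  then show ?thesis using assms(2) by (auto intro: orbit_trans)
qed

lemma card_orbit:
  assumes "d \<in> D" shows "card (orbit s d) = funpow_dist1 s d d"
  using orbit_conv_funpow_dist1[OF self_in_orbit[OF assms]]
    inj_on_funpow_dist1[OF self_in_orbit[OF assms]] by (simp add: card_image)

end


definition orbit_segment :: "('b \<Rightarrow> 'b) \<Rightarrow> 'b \<Rightarrow> 'b \<Rightarrow> 'b set" where
  "orbit_segment f x y = {(f ^^ i) x | i. 0 < i \<and> i < funpow_dist1 f x y}"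

lemma mem_orbit_segment_iff:
  "d \<in> orbit_segment f x y \<longleftrightarrow> (\<exists>i. d = (f ^^ i) x \<and> 0 < i \<and> i < funpow_dist1 f x y)"
  unfolding orbit_segment_def by blast

lemma orbit_segment_not_ends:
  assumes "y \<in> orbit f x" "d \<in> orbit_segment f x y" shows "d \<noteq> x" "d \<noteq> y"
proof -
  obtain i where i: "d = (f ^^ i) x" "0 < i" "i < funpow_dist1 f x y"
    using assms(2) unfolding mem_orbit_segment_iff by blast
  show "d \<noteq> x" using funpow_neq_less_funpow_dist1[OF assms(1), of i 0] i by simp
  show "d \<noteq> y" using funpow_dist1_least[OF i(2,3)] i(1) by simp
qed

lemma orbit_segment_step:
  assumes "y \<in> orbit f x" "d \<in> orbit_segment f x y"
  shows "f d \<in> orbit_segment f x y \<or> f d = y"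
proof -
  obtain i where i: "d = (f ^^ i) x" "0 < i" "i < funpow_dist1 f x y"
    using assms(2) unfolding mem_orbit_segment_iff by blast
  then have fd: "f d = (f ^^ Suc i) x" by simp
  consider "Suc i < funpow_dist1 f x y" | "Suc i = funpow_dist1 f x y" using i(3) by linarith
  then show ?thesis
  proof cases
    case 1
    then show ?thesis unfolding mem_orbit_segment_iff using fd by blast
  next
    case 2
    then show ?thesis using fd funpow_dist1_prop[OF assms(1)] by metis
  qed
qed

lemma orbit_segment_first:
  assumes "y \<in> orbit f x" "f x \<noteq> y" shows "f x \<in> orbit_segment f x y"
proof -
  have "funpow_dist1 f x y \<noteq> 1"
  proof
    assume "funpow_dist1 f x y = 1"
    then have "(f ^^ 1) x = y" using funpow_dist1_prop[OF assms(1)] by metis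
    then show False using assms(2) by simp
  qed
  then show ?thesis unfolding mem_orbit_segment_iff by (intro exI[of _ 1]) simp
qed

lemma orbit_segments_disjoint:
  assumes "x \<noteq> y" "y \<in> orbit f x" "x \<in> orbit f y"
  shows "orbit_segment f x y \<inter> orbit_segment f y x = {}"
proof -
  have False if i: "0 < i" "i < funpow_dist1 f x y" and k: "0 < k" "k < funpow_dist1 f y x"
    and eq: "(f ^^ i) x = (f ^^ k) y" for i k
  proof -
    define j where "j = funpow_dist1 f x y"
    define m where "m = funpow_dist1 f y x"
    have to_y: "(f ^^ (j - i)) ((f ^^ i) x) = y"
      using funpow_dist1_prop[OF assms(2)] i unfolding j_def by (simp add: funpow_funpow)
    have to_x: "(f ^^ (m - k)) ((f ^^ i) x) = x"
      using funpow_dist1_prop[OF assms(3)] k unfolding m_def eq by (simp add: funpow_funpow)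
    consider "m - k < j - i" | "j - i < m - k" | "m - k = j - i" by linarith
    then show False
    proof cases
      case 1
      have "(f ^^ (j - i - (m - k))) x = (f ^^ (j - i - (m - k))) ((f ^^ (m - k)) ((f ^^ i) x))"
        by (simp only: to_x)
      also have "\<dots> = (f ^^ (j - i - (m - k) + (m - k))) ((f ^^ i) x)"
        by (rule funpow_funpow)
      also have "\<dots> = y" using 1 to_y by simp
      finally have "(f ^^ (j - i - (m - k))) x = y" .
      moreover have "0 < j - i - (m - k)" "j - i - (m - k) < j" using 1 i(1) by linarith+
      ultimately show False using funpow_dist1_least[of "j - i - (m - k)" f x y] j_def by simp
    next
      case 2
      have "(f ^^ (m - k - (j - i))) y = (f ^^ (m - k - (j - i))) ((f ^^ (j - i)) ((f ^^ i) x))"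
        by (simp only: to_y)
      also have "\<dots> = (f ^^ (m - k - (j - i) + (j - i))) ((f ^^ i) x)"
        by (rule funpow_funpow)
      also have "\<dots> = x" using 2 to_x by simp
      finally have "(f ^^ (m - k - (j - i))) y = x" .
      moreover have "0 < m - k - (j - i)" "m - k - (j - i) < m" using 2 k(1) by linarith+
      ultimately show False using funpow_dist1_least[of "m - k - (j - i)" f y x] m_def by simp
    next
      case 3
      then show False using to_x to_y assms(1) by simp
    qed
  qed
  then show ?thesis unfolding orbit_segment_def by blast
qed

section \<open>Simple graphs and rotation systems\<close>

abbreviation (input) adj :: "'a set set \<Rightarrow> 'a \<Rightarrow> 'a \<Rightarrow> bool" where
  "adj E \<equiv> \<lambda>x y. {x, y} \<in> E"

lemma adj_rtranclp_sym: "(adj E)\<^sup>*\<^sup>* x y \<Longrightarrow> (adj E)\<^sup>*\<^sup>* y x"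
proof -
  have "symp (adj E)" by (rule sympI) (simp add: insert_commute)
  then show "(adj E)\<^sup>*\<^sup>* x y \<Longrightarrow> (adj E)\<^sup>*\<^sup>* y x" using symp_rtranclp sympD by metis
qed

lemma adj_rtranclp_mono: "(adj E')\<^sup>*\<^sup>* x y \<Longrightarrow> E' \<subseteq> E \<Longrightarrow> (adj E)\<^sup>*\<^sup>* x y"
  by (induction rule: rtranclp_induct) (auto intro: rtranclp.rtrancl_into_rtrancl)

definition component :: "'a set \<Rightarrow> 'a set set \<Rightarrow> 'a \<Rightarrow> 'a set" where
  "component V E x = {y \<in> V. (adj E)\<^sup>*\<^sup>* x y}"

lemma components_eq_image: "components V E = component V E ` V"
  unfolding components_def component_def by blast

lemma component_eq:
  assumes "(adj E)\<^sup>*\<^sup>* c x" shows "component V E x = component V E c"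
proof -
  have "(adj E)\<^sup>*\<^sup>* x y \<longleftrightarrow> (adj E)\<^sup>*\<^sup>* c y" for y
    using rtranclp_trans[OF assms] rtranclp_trans[OF adj_rtranclp_sym[OF assms]] by blast
  then show ?thesis unfolding component_def by simp
qed

lemma edge_vertices:
  assumes "simple_graph V E" "{x, y} \<in> E" shows "x \<in> V" "y \<in> V" "x \<noteq> y"
  using assms unfolding simple_graph_def by (metis doubleton_eq_iff insert_absorb2)+

lemma simple_graph_edgeE:
  assumes "simple_graph V E" "e \<in> E"
  obtains x y where "e = {x, y}" "x \<noteq> y" "x \<in> V" "y \<in> V"
  using assms unfolding simple_graph_def by blast

lemma simple_graph_finite: "simple_graph V E \<Longrightarrow> finite V"
  unfolding simple_graph_def by blast

lemma simple_graph_finite_edges: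
  assumes "simple_graph V E" shows "finite E"
proof -
  have "E \<subseteq> Pow V" using simple_graph_edgeE[OF assms] by blast
  then show ?thesis using finite_subset simple_graph_finite[OF assms] by blast
qed

lemma simple_graph_delete_edges: "simple_graph V E \<Longrightarrow> simple_graph V (E - X)"
  unfolding simple_graph_def by blast

lemma mem_neighbours_iff: "y \<in> neighbours V E x \<longleftrightarrow> y \<in> V \<and> y \<noteq> x \<and> {x, y} \<in> E"
  unfolding neighbours_def by (auto simp: insert_commute)

lemma neighbours_subset: "neighbours V E x \<subseteq> V"
  unfolding neighbours_def by blast

lemma finite_neighbours: "simple_graph V E \<Longrightarrow> finite (neighbours V E x)"
  by (meson finite_subset neighbours_subset simple_graph_finite)

lemma edge_imp_neighbour: "simple_graph V E \<Longrightarrow> {x, y} \<in> E \<Longrightarrow> y \<in> neighbours V E x"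
  unfolding mem_neighbours_iff using edge_vertices by metis

lemma neighbour_sym: "simple_graph V E \<Longrightarrow> y \<in> neighbours V E x \<Longrightarrow> x \<in> neighbours V E y"
  by (metis edge_imp_neighbour insert_commute mem_neighbours_iff)

lemma mem_darts_iff: "(x, y) \<in> darts V E \<longleftrightarrow> x \<in> V \<and> y \<in> V \<and> x \<noteq> y \<and> {x, y} \<in> E"
  unfolding darts_def by simp

lemma dart_iff_neighbour: "(x, y) \<in> darts V E \<longleftrightarrow> y \<in> V \<and> x \<in> neighbours V E y"
  unfolding mem_darts_iff mem_neighbours_iff by (auto simp: insert_commute)

lemma finite_darts: "simple_graph V E \<Longrightarrow> finite (darts V E)"
  using finite_subset[of "darts V E" "V \<times> V"] simple_graph_finite
  unfolding darts_def by blast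

definition cyclic_perm_on :: "('b \<Rightarrow> 'b) \<Rightarrow> 'b set \<Rightarrow> bool" where
  "cyclic_perm_on r N \<longleftrightarrow>
     (\<forall>x\<in>N. r x \<in> N) \<and> inj_on r N \<and> (\<forall>x\<in>N. \<forall>y\<in>N. \<exists>n. (r ^^ n) x = y)"

lemma rotation_system_iff:
  "rotation_system V E rot \<longleftrightarrow> (\<forall>v\<in>V. cyclic_perm_on (rot v) (neighbours V E v))"
  unfolding rotation_system_def cyclic_perm_on_def ..

lemma rotation_in_neighbours:
  "rotation_system V E rot \<Longrightarrow> v \<in> V \<Longrightarrow> x \<in> neighbours V E v \<Longrightarrow> rot v x \<in> neighbours V E v"
  unfolding rotation_system_def by blast

lemma cyclic_perm_on_orbit_subset:
  assumes "cyclic_perm_on r N" "x \<in> N" "\<And>n. (r ^^ n) x \<in> A" shows "N \<subseteq> A"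
proof
  fix y assume "y \<in> N"
  then obtain n where "(r ^^ n) x = y" using assms(1,2) unfolding cyclic_perm_on_def by blast
  then show "y \<in> A" using assms(3) by blast
qed

lemma rotation_fixpoint_imp_single_neighbour:
  assumes "rotation_system V E rot" "v \<in> V" "x \<in> neighbours V E v" "rot v x = x"
  shows "neighbours V E v = {x}"
proof -
  have "cyclic_perm_on (rot v) (neighbours V E v)" using assms(1,2) by (simp add: rotation_system_iff)
  moreover have "(rot v ^^ n) x \<in> {x}" for n by (induction n) (use assms in auto)
  ultimately have "neighbours V E v \<subseteq> {x}" by (rule cyclic_perm_on_orbit_subset[OF _ assms(3)])
  then show ?thesis using assms(3) by blast
qed

lemma rotation_2_cycle_imp_two_neighbours:
  assumes "rotation_system V E rot" "v \<in> V" "x \<in> neighbours V E v" "rot v (rot v x) = x"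
  shows "neighbours V E v \<subseteq> {x, rot v x}"
proof -
  have "cyclic_perm_on (rot v) (neighbours V E v)" using assms(1,2) by (simp add: rotation_system_iff)
  moreover have "(rot v ^^ n) x \<in> {x, rot v x}" for n by (induction n) (use assms in auto)
  ultimately show ?thesis by (rule cyclic_perm_on_orbit_subset[OF _ assms(3)])
qed

lemma face_step_in_darts:
  assumes "simple_graph V E" "rotation_system V E rot" "d \<in> darts V E"
  shows "face_step rot d \<in> darts V E"
proof -
  obtain x y where d: "d = (x, y)" by fastforce
  then have "y \<in> V" "x \<in> neighbours V E y" using assms(3) by (simp_all add: dart_iff_neighbour)
  then have "rot y x \<in> neighbours V E y" using rotation_in_neighbours[OF assms(2)] by blast
  then have "(y, rot y x) \<in> darts V E"
    using neighbour_sym[OF assms(1)] neighbours_subset by (fastforce simp: dart_iff_neighbour)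
  then show ?thesis by (simp add: d face_step_def)
qed

lemma inj_on_face_step:
  assumes "rotation_system V E rot" shows "inj_on (face_step rot) (darts V E)"
proof (rule inj_onI)
  fix d e assume "d \<in> darts V E" "e \<in> darts V E" "face_step rot d = face_step rot e"
  then show "d = e"
    using assms unfolding rotation_system_def inj_on_def
    by (cases d, cases e) (auto simp: face_step_def dart_iff_neighbour)
qed

lemma finite_injection_face_step:
  "simple_graph V E \<Longrightarrow> rotation_system V E rot \<Longrightarrow> finite_injection (darts V E) (face_step rot)"
  by unfold_locales (auto intro: finite_darts face_step_in_darts inj_on_face_step)

lemma face_eq_orbit:
  assumes "simple_graph V E" "rotation_system V E rot" "d \<in> darts V E"
  shows "face rot d = orbit (face_step rot) d"
proof -
  interpret finite_injection "darts V E" "face_step rot"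
    using assms(1,2) by (rule finite_injection_face_step)
  show ?thesis
    unfolding face_def using orbit_altdef_self_in[OF self_in_orbit[OF assms(3)]] by simp
qed

lemma faces_eq_orbits:
  "simple_graph V E \<Longrightarrow> rotation_system V E rot \<Longrightarrow> faces V E rot = orbit (face_step rot) ` darts V E"
  unfolding faces_def using face_eq_orbit by (metis (no_types, lifting) image_cong)

section \<open>Deleting an edge from a rotation system\<close>

definition skip :: "('b \<Rightarrow> 'b) \<Rightarrow> 'b \<Rightarrow> 'b \<Rightarrow> 'b" where
  "skip r c x = (if r x = c then r c else r x)"

lemma skip_reaches:
  assumes cyc: "cyclic_perm_on r N" and c: "c \<in> N"
    and "x \<in> N - {c}" "y \<in> N - {c}" "(r ^^ n) x = y"
  shows "\<exists>m. (skip r c ^^ m) x = y"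
  using assms(3-5)
proof (induction n arbitrary: x rule: less_induct)
  case (less n)
  have maps: "r z \<in> N" if "z \<in> N" for z using cyc that unfolding cyclic_perm_on_def by blast
  have rc: "r c \<in> N - {c}" if "r z = c" "z \<in> N - {c}" for z
    using cyc c that unfolding cyclic_perm_on_def by (metis DiffD1 DiffD2 DiffI inj_on_eq_iff singleton_iff)
  show ?case
  proof (cases n)
    case 0
    then show ?thesis using less.prems by (metis funpow_0)
  next
    case (Suc k)
    then have k: "(r ^^ k) (r x) = y" using less.prems(3) by (simp add: funpow_swap1)
    show ?thesis
    proof (cases "r x = c")
      case True
      with k less.prems(2) obtain l where "k = Suc l" "(r ^^ l) (r c) = y"
        by (cases k) (auto simp: funpow_swap1)
      then obtain m where "(skip r c ^^ m) (r c) = y"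
        using less.IH[of l "r c"] rc[OF True less.prems(1)] less.prems(2) Suc by auto
      moreover have "skip r c x = r c" using True by (simp add: skip_def)
      ultimately show ?thesis by (metis funpow_Suc_right o_apply)
    next
      case False
      then obtain m where "(skip r c ^^ m) (r x) = y"
        using less.IH[of k "r x"] k maps less.prems(1,2) Suc by auto
      moreover have "skip r c x = r x" using False by (simp add: skip_def)
      ultimately show ?thesis by (metis funpow_Suc_right o_apply)
    qed
  qed
qed

lemma cyclic_perm_on_skip:
  assumes cyc: "cyclic_perm_on r N" and c: "c \<in> N"
  shows "cyclic_perm_on (skip r c) (N - {c})"
  unfolding cyclic_perm_on_def
proof (intro conjI ballI)
  have maps: "\<forall>x\<in>N. r x \<in> N" and inj: "inj_on r N" and conn: "\<forall>x\<in>N. \<forall>y\<in>N. \<exists>n. (r ^^ n) x = y"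
    using cyc unfolding cyclic_perm_on_def by auto
  have rc: "r c \<in> N - {c}" if "x \<in> N - {c}" "r x = c" for x
    using that maps inj c by (metis DiffE DiffI inj_on_contraD singletonD singletonI)
  show "skip r c x \<in> N - {c}" if "x \<in> N - {c}" for x
    using that rc maps by (auto simp: skip_def)
  show "inj_on (skip r c) (N - {c})"
    using inj rc c unfolding skip_def inj_on_def by (metis DiffE singletonI)
  show "\<exists>n. (skip r c ^^ n) x = y" if "x \<in> N - {c}" "y \<in> N - {c}" for x y
    using that conn skip_reaches[OF cyc c] by blast
qed

definition delete_edge_rotation :: "('a \<Rightarrow> 'a \<Rightarrow> 'a) \<Rightarrow> 'a \<Rightarrow> 'a \<Rightarrow> 'a \<Rightarrow> 'a \<Rightarrow> 'a" where
  "delete_edge_rotation rot a b z =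
     (if z = a then skip (rot a) b else if z = b then skip (rot b) a else rot z)"

lemma delete_edge_rotation_commute:
  "a \<noteq> b \<Longrightarrow> delete_edge_rotation rot b a = delete_edge_rotation rot a b"
  unfolding delete_edge_rotation_def by auto

lemma neighbours_delete_edge:
  "neighbours V (E - {{a, b}}) z =
     neighbours V E z - (if z = a then {b} else {}) - (if z = b then {a} else {})"
  unfolding neighbours_def by (auto simp: doubleton_eq_iff)

lemma rotation_system_delete_edge:
  assumes "simple_graph V E" "rotation_system V E rot" "{a, b} \<in> E"
  shows "rotation_system V (E - {{a, b}}) (delete_edge_rotation rot a b)"
  unfolding rotation_system_iff
proof
  fix z assume z: "z \<in> V"
  then have cyc: "cyclic_perm_on (rot z) (neighbours V E z)"
    using assms(2) by (simp add: rotation_system_iff)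
  have "a \<noteq> b" using edge_vertices[OF assms(1,3)] by simp
  moreover have "b \<in> neighbours V E a" by (rule edge_imp_neighbour[OF assms(1,3)])
  moreover then have "a \<in> neighbours V E b" by (rule neighbour_sym[OF assms(1)])
  ultimately show "cyclic_perm_on (delete_edge_rotation rot a b z) (neighbours V (E - {{a, b}}) z)"
    using cyc cyclic_perm_on_skip
    by (auto simp: neighbours_delete_edge delete_edge_rotation_def)
qed

lemma face_step_delete_edge:
  assumes "a \<noteq> b"
  shows "face_step (delete_edge_rotation rot a b) d =
    (if face_step rot d \<in> {(a, b), (b, a)} then face_step rot (prod.swap (face_step rot d))
     else face_step rot d)"
  using assms by (cases d) (auto simp: face_step_def delete_edge_rotation_def skip_def)

locale edge_deletion =
  fixes V :: "'a set" and E :: "'a set set" and rot :: "'a \<Rightarrow> 'a \<Rightarrow> 'a" and a b :: 'a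
  assumes simple: "simple_graph V E" and rotation: "rotation_system V E rot"
    and edge: "{a, b} \<in> E"
begin

abbreviation "E' \<equiv> E - {{a, b}}"
abbreviation "rot' \<equiv> delete_edge_rotation rot a b"
abbreviation "\<sigma> \<equiv> face_step rot"
abbreviation "\<sigma>' \<equiv> face_step rot'"
abbreviation "faces_off_edge \<equiv> faces V E rot - {orbit \<sigma> (a, b), orbit \<sigma> (b, a)}"

lemma edge_ends: "a \<in> V" "b \<in> V" "a \<noteq> b"
  using edge_vertices[OF simple edge] by auto

lemma simple': "simple_graph V E'"
  by (rule simple_graph_delete_edges[OF simple])

lemma rotation': "rotation_system V E' rot'"
  by (rule rotation_system_delete_edge[OF simple rotation edge])

sublocale G: finite_injection "darts V E" \<sigma>
  by (rule finite_injection_face_step[OF simple rotation])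

sublocale G': finite_injection "darts V E'" \<sigma>'
  by (rule finite_injection_face_step[OF simple' rotation'])

lemma darts_delete_edge: "darts V E' = darts V E - {(a, b), (b, a)}"
  unfolding darts_def by (auto simp: doubleton_eq_iff)

lemma edge_darts: "(a, b) \<in> darts V E" "(b, a) \<in> darts V E"
  using edge_ends edge by (auto simp: mem_darts_iff insert_commute)

lemma edge_neighbours: "b \<in> neighbours V E a" "a \<in> neighbours V E b"
  using edge_imp_neighbour[OF simple edge] neighbour_sym[OF simple] by blast+

lemma faces_eq: "faces V E rot = orbit \<sigma> ` darts V E" "faces V E' rot' = orbit \<sigma>' ` darts V E'"
  using faces_eq_orbits simple rotation simple' rotation' by blast+

lemma finite_faces: "finite (faces V E rot)" "finite (faces V E' rot')"
  unfolding faces_def using finite_darts simple simple' by auto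

lemma face_step': "\<sigma>' d = (if \<sigma> d \<in> {(a, b), (b, a)} then \<sigma> (prod.swap (\<sigma> d)) else \<sigma> d)"
  by (rule face_step_delete_edge[OF edge_ends(3)])

lemma orbit_off_edge:
  assumes "d \<in> darts V E" "(a, b) \<notin> orbit \<sigma> d" "(b, a) \<notin> orbit \<sigma> d"
  shows "orbit \<sigma>' d = orbit \<sigma> d"
proof (rule orbit_cong)
  show "d \<in> orbit \<sigma> d" by (rule G.self_in_orbit[OF assms(1)])
  fix e assume "e \<in> orbit \<sigma> d"
  then have "\<sigma> e \<in> orbit \<sigma> d" by (rule orbit.step)
  then have "\<sigma> e \<notin> {(a, b), (b, a)}" using assms(2,3) by auto
  then show "\<sigma>' e = \<sigma> e" by (simp add: face_step')
qed

lemma faces_off_edge_subset: "faces_off_edge \<subseteq> faces V E' rot'"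
proof
  fix F assume F: "F \<in> faces_off_edge"
  then obtain d where d: "d \<in> darts V E" "F = orbit \<sigma> d" unfolding faces_eq by auto
  have off: "(a, b) \<notin> orbit \<sigma> d" "(b, a) \<notin> orbit \<sigma> d"
    using F d G.orbit_eq[OF d(1)] by blast+
  then have "d \<in> darts V E'"
    using d(1) G.self_in_orbit[OF d(1)] darts_delete_edge by auto
  then show "F \<in> faces V E' rot'"
    using orbit_off_edge[OF d(1) off] d(2) faces_eq(2) by auto
qed

lemma new_face_not_off_edge:
  assumes "d \<in> darts V E'" "d \<in> orbit \<sigma> (a, b) \<union> orbit \<sigma> (b, a)"
  shows "orbit \<sigma>' d \<notin> faces_off_edge"
proof
  assume "orbit \<sigma>' d \<in> faces_off_edge"
  then obtain e where e: "e \<in> darts V E" "orbit \<sigma>' d = orbit \<sigma> e"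
    "orbit \<sigma> e \<noteq> orbit \<sigma> (a, b)" "orbit \<sigma> e \<noteq> orbit \<sigma> (b, a)"
    unfolding faces_eq by auto
  have "d \<in> orbit \<sigma> e" using G'.self_in_orbit[OF assms(1)] e(2) by simp
  then have "orbit \<sigma> d = orbit \<sigma> e" by (rule G.orbit_eq[OF e(1)])
  moreover have "orbit \<sigma> d = orbit \<sigma> (a, b) \<or> orbit \<sigma> d = orbit \<sigma> (b, a)"
    using assms(2) G.orbit_eq edge_darts by blast
  ultimately show False using e(3,4) by auto
qed

lemma card_faces_le_off_edge: "card (faces V E rot) \<le> card faces_off_edge + 2"
proof -
  let ?S = "{orbit \<sigma> (a, b), orbit \<sigma> (b, a)}"
  have "card (faces V E rot) \<le> card (faces_off_edge \<union> ?S)"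
    using finite_faces by (intro card_mono) auto
  also have "\<dots> \<le> card faces_off_edge + card ?S" by (rule card_Un_le)
  also have "card ?S \<le> 2" by (simp add: card_insert_le_m1)
  finally show ?thesis by simp
qed

lemma card_faces_delete_edge_distinct_sides:
  assumes "orbit \<sigma> (a, b) \<noteq> orbit \<sigma> (b, a)"
  shows "card (faces V E rot) \<le> card (faces V E' rot') + 1"
proof -
  define d where "d = \<sigma> (a, b)"
  have d_in: "d \<in> orbit \<sigma> (a, b)" unfolding d_def by (rule orbit.base)
  then have "d \<noteq> (b, a)" using assms G.orbit_eq[OF edge_darts(1)] by auto
  moreover have "d \<noteq> (a, b)" using edge_ends(3) by (simp add: d_def face_step_def)
  ultimately have d': "d \<in> darts V E'"
    using G.maps_to[OF edge_darts(1)] darts_delete_edge unfolding d_def by auto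
  then have "insert (orbit \<sigma>' d) faces_off_edge \<subseteq> faces V E' rot'"
    using faces_off_edge_subset faces_eq(2) by auto
  moreover have "orbit \<sigma>' d \<notin> faces_off_edge" using new_face_not_off_edge[OF d'] d_in by blast
  ultimately have "card faces_off_edge + 1 \<le> card (faces V E' rot')"
    using finite_faces card_mono[of "faces V E' rot'" "insert (orbit \<sigma>' d) faces_off_edge"]
    by (simp add: finite_subset)
  then show ?thesis using card_faces_le_off_edge by linarith
qed

lemma isolated_subset: "isolated V E \<subseteq> isolated V E'"
  unfolding isolated_def neighbours_def by auto

lemma finite_isolated: "finite (isolated V E')"
  unfolding isolated_def using simple_graph_finite[OF simple] by simp

lemma orbit_segment_closed:
  assumes "(b, a) \<in> orbit \<sigma> (a, b)" "\<sigma> (a, b) \<noteq> (b, a)"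
    and "d \<in> orbit_segment \<sigma> (a, b) (b, a)"
  shows "\<sigma>' d \<in> orbit_segment \<sigma> (a, b) (b, a)"
  using orbit_segment_step[OF assms(1,3)]
proof
  assume "\<sigma> d \<in> orbit_segment \<sigma> (a, b) (b, a)"
  moreover then have "\<sigma> d \<notin> {(a, b), (b, a)}" using orbit_segment_not_ends[OF assms(1)] by blast
  ultimately show ?thesis by (simp add: face_step')
next
  assume "\<sigma> d = (b, a)"
  then show ?thesis using orbit_segment_first[OF assms(1,2)] by (simp add: face_step')
qed

lemma orbit_segment_subset_darts:
  assumes "(b, a) \<in> orbit \<sigma> (a, b)"
  shows "orbit_segment \<sigma> (a, b) (b, a) \<subseteq> darts V E'"
proof
  fix d assume d: "d \<in> orbit_segment \<sigma> (a, b) (b, a)"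
  then have "d \<in> darts V E" using G.funpow_in[OF edge_darts(1)] by (auto simp: mem_orbit_segment_iff)
  then show "d \<in> darts V E'" using orbit_segment_not_ends[OF assms d] darts_delete_edge by simp
qed

lemma side_of_deleted_edge:
  assumes "(b, a) \<in> orbit \<sigma> (a, b)"
  shows "b \<in> isolated V E' \<or> (\<exists>F\<in>faces V E' rot'. F \<noteq> {} \<and> F \<subseteq> orbit_segment \<sigma> (a, b) (b, a))"
proof (cases "\<sigma> (a, b) = (b, a)")
  case True
  then have "rot b a = a" by (simp add: face_step_def)
  then have "neighbours V E b = {a}"
    using rotation_fixpoint_imp_single_neighbour[OF rotation edge_ends(2) edge_neighbours(2)] by blast
  then have "b \<in> isolated V E'"
    using edge_ends by (auto simp: isolated_def neighbours_delete_edge)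
  then show ?thesis ..
next
  case False
  let ?P = "orbit_segment \<sigma> (a, b) (b, a)"
  have first: "\<sigma> (a, b) \<in> ?P" by (rule orbit_segment_first[OF assms False])
  then have "orbit \<sigma>' (\<sigma> (a, b)) \<in> faces V E' rot'"
    using orbit_segment_subset_darts[OF assms] faces_eq(2) by auto
  moreover have "orbit \<sigma>' (\<sigma> (a, b)) \<subseteq> ?P"
  proof
    fix d assume "d \<in> orbit \<sigma>' (\<sigma> (a, b))"
    then show "d \<in> ?P" by induction (use first orbit_segment_closed[OF assms False] in auto)
  qed
  ultimately show ?thesis by (meson orbit_nonempty)
qed

lemma card_ge_2: "finite A \<Longrightarrow> x \<in> A \<Longrightarrow> y \<in> A \<Longrightarrow> x \<noteq> y \<Longrightarrow> 2 \<le> card A"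
  using card_mono[of A "{x, y}"] by simp

lemma new_face:
  assumes "F \<in> faces V E' rot'" "F \<noteq> {}" "F \<subseteq> orbit \<sigma> (a, b)"
  shows "F \<notin> faces_off_edge"
proof -
  obtain d where d: "d \<in> F" using assms(2) by blast
  obtain e where "e \<in> darts V E'" "F = orbit \<sigma>' e" using assms(1) faces_eq(2) by auto
  then have "orbit \<sigma>' d = F" "d \<in> darts V E'" using d G'.orbit_eq G'.orbit_subset by blast+
  then show ?thesis using new_face_not_off_edge[of d] d assms(3) by auto
qed

lemma two_new_faces_or_isolated:
  assumes same: "orbit \<sigma> (a, b) = orbit \<sigma> (b, a)"
  shows "2 \<le> card (faces V E' rot' - faces_off_edge) + card (isolated V E' - isolated V E)"
    (is "2 \<le> card ?F + card ?I")
proof -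
  interpret swapped: edge_deletion V E rot b a
    using simple rotation edge by unfold_locales (simp_all add: insert_commute)
  have swap_eqs: "E - {{b, a}} = E'" "delete_edge_rotation rot b a = rot'"
    using delete_edge_rotation_commute[OF edge_ends(3)] by (auto simp: insert_commute)
  have ba_in: "(b, a) \<in> orbit \<sigma> (a, b)" and ab_in: "(a, b) \<in> orbit \<sigma> (b, a)"
    using same G.self_in_orbit edge_darts by auto
  have fin: "finite ?F" "finite ?I" using finite_faces finite_isolated by auto
  have segments: "orbit_segment \<sigma> (a, b) (b, a) \<subseteq> orbit \<sigma> (a, b)"
    "orbit_segment \<sigma> (b, a) (a, b) \<subseteq> orbit \<sigma> (a, b)"
    using same unfolding orbit_segment_def orbit_altdef by blast+
  have end_new: "z \<in> ?I" if "z \<in> isolated V E'" "z \<in> {a, b}" for z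
    using that edge_neighbours unfolding isolated_def by auto
  show ?thesis
    using swapped.side_of_deleted_edge[OF ab_in, unfolded swap_eqs] side_of_deleted_edge[OF ba_in]
  proof (elim disjE bexE conjE)
    assume "a \<in> isolated V E'" "b \<in> isolated V E'"
    then have "a \<in> ?I" "b \<in> ?I" using end_new by simp_all
    then have "2 \<le> card ?I" using card_ge_2[OF fin(2)] edge_ends(3) by blast
    then show ?thesis by linarith
  next
    fix F assume "a \<in> isolated V E'" "F \<in> faces V E' rot'" "F \<noteq> {}"
      "F \<subseteq> orbit_segment \<sigma> (a, b) (b, a)"
    then have "F \<in> ?F" "a \<in> ?I" using new_face segments(1) end_new by auto
    then have "0 < card ?F" "0 < card ?I" using fin by (auto simp: card_gt_0_iff)
    then show ?thesis by linarith
  next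
    fix F assume "b \<in> isolated V E'" "F \<in> faces V E' rot'" "F \<noteq> {}"
      "F \<subseteq> orbit_segment \<sigma> (b, a) (a, b)"
    then have "F \<in> ?F" "b \<in> ?I" using new_face segments(2) end_new by auto
    then have "0 < card ?F" "0 < card ?I" using fin by (auto simp: card_gt_0_iff)
    then show ?thesis by linarith
  next
    fix F\<^sub>1 F\<^sub>2
    assume F\<^sub>1: "F\<^sub>1 \<in> faces V E' rot'" "F\<^sub>1 \<noteq> {}" "F\<^sub>1 \<subseteq> orbit_segment \<sigma> (b, a) (a, b)"
      and F\<^sub>2: "F\<^sub>2 \<in> faces V E' rot'" "F\<^sub>2 \<noteq> {}" "F\<^sub>2 \<subseteq> orbit_segment \<sigma> (a, b) (b, a)"
    have "F\<^sub>1 \<in> ?F" "F\<^sub>2 \<in> ?F" using new_face F\<^sub>1 F\<^sub>2 segments by auto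
    moreover have "F\<^sub>1 \<noteq> F\<^sub>2"
    proof
      have "(a, b) \<noteq> (b, a)" using edge_ends(3) by simp
      then have "orbit_segment \<sigma> (a, b) (b, a) \<inter> orbit_segment \<sigma> (b, a) (a, b) = {}"
        by (rule orbit_segments_disjoint[OF _ ba_in ab_in])
      moreover assume "F\<^sub>1 = F\<^sub>2"
      ultimately show False using F\<^sub>1(2,3) F\<^sub>2(3) by blast
    qed
    ultimately have "2 \<le> card ?F" by (rule card_ge_2[OF fin(1)])
    then show ?thesis by linarith
  qed
qed

lemma card_faces_isolated_delete_edge_same_side:
  assumes same: "orbit \<sigma> (a, b) = orbit \<sigma> (b, a)"
  shows "card (faces V E rot) + card (isolated V E) + 1 \<le> card (faces V E' rot') + card (isolated V E')"
proof -
  have "card (faces V E' rot' - faces_off_edge) = card (faces V E' rot') - card faces_off_edge"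
    "card faces_off_edge \<le> card (faces V E' rot')"
    using faces_off_edge_subset finite_faces card_mono[of "faces V E' rot'" faces_off_edge]
    by (auto simp: card_Diff_subset finite_subset)
  moreover have "card (isolated V E' - isolated V E) = card (isolated V E') - card (isolated V E)"
    "card (isolated V E) \<le> card (isolated V E')"
    using isolated_subset finite_isolated card_mono[of "isolated V E'" "isolated V E"]
    by (auto simp: card_Diff_subset finite_subset)
  moreover have "card (faces V E rot) \<le> card faces_off_edge + 1"
  proof -
    have "card (faces V E rot) \<le> card (insert (orbit \<sigma> (a, b)) faces_off_edge)"
      using same finite_faces by (intro card_mono) auto
    also have "\<dots> \<le> card faces_off_edge + 1" using finite_faces by (simp add: card_insert_if)
    finally show ?thesis .
  qed
  ultimately show ?thesis using two_new_faces_or_isolated[OF same] by linarith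
qed

lemma reachable_face_step:
  assumes "\<not> (adj E')\<^sup>*\<^sup>* b a" and d: "d \<in> darts V E" "(adj E')\<^sup>*\<^sup>* b (snd d)" "\<sigma> d \<noteq> (b, a)"
  shows "(adj E')\<^sup>*\<^sup>* b (snd (\<sigma> d))"
proof -
  obtain x y where xy: "d = (x, y)" by fastforce
  define z where "z = rot y x"
  have step: "\<sigma> d = (y, z)" unfolding xy z_def face_step_def by simp
  have "z \<in> neighbours V E y"
    using d(1) rotation_in_neighbours[OF rotation] unfolding xy z_def dart_iff_neighbour by blast
  then have yz: "{y, z} \<in> E" by (simp add: mem_neighbours_iff)
  have "{y, z} \<noteq> {a, b}"
  proof
    assume "{y, z} = {a, b}"
    moreover have "y \<noteq> a" using d(2) assms(1) unfolding xy by auto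
    ultimately have "\<sigma> d = (b, a)" using step by (auto simp: doubleton_eq_iff)
    with d(3) show False ..
  qed
  with yz have "adj E' y z" by simp
  then show ?thesis using d(2) step unfolding xy by (simp add: rtranclp.rtrancl_into_rtrancl)
qed

lemma reachable_if_distinct_sides:
  assumes distinct: "orbit \<sigma> (a, b) \<noteq> orbit \<sigma> (b, a)"
  shows "(adj E')\<^sup>*\<^sup>* b a"
proof (rule ccontr)
  assume unreachable: "\<not> (adj E')\<^sup>*\<^sup>* b a"
  have ba_notin: "(b, a) \<notin> orbit \<sigma> (a, b)"
    using distinct G.orbit_eq[OF edge_darts(1)] by metis
  have "d \<in> darts V E \<and> (adj E')\<^sup>*\<^sup>* b (fst d) \<and> (adj E')\<^sup>*\<^sup>* b (snd d)" if "d \<in> orbit \<sigma> (a, b)" for d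
    using that
  proof induction
    case base
    have "\<sigma> (a, b) \<noteq> (b, a)" using ba_notin orbit.base by metis
    then show ?case
      using reachable_face_step[OF unreachable edge_darts(1)] edge_darts(1) G.maps_to
      by (auto simp: face_step_def)
  next
    case (step d)
    have "\<sigma> d \<noteq> (b, a)" using ba_notin orbit.step[OF step.hyps] by metis
    then show ?case
      using reachable_face_step[OF unreachable] step.IH G.maps_to by (auto simp: face_step_def)
  qed
  then have "(adj E')\<^sup>*\<^sup>* b a" using G.self_in_orbit[OF edge_darts(1)] by fastforce
  with unreachable show False ..
qed

lemma reachable_after_delete_edge:
  assumes "(adj E)\<^sup>*\<^sup>* x y"
  shows "(adj E')\<^sup>*\<^sup>* x y \<or> (adj E')\<^sup>*\<^sup>* a y \<or> (adj E')\<^sup>*\<^sup>* b y"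
  using assms
proof induction
  case (step y z)
  show ?case
  proof (cases "{y, z} = {a, b}")
    case True
    then have "z = a \<or> z = b" by (auto simp: doubleton_eq_iff)
    then show ?thesis by auto
  next
    case False
    with step.hyps(2) have "adj E' y z" by simp
    with step.IH show ?thesis by (meson rtranclp.rtrancl_into_rtrancl)
  qed
qed simp

lemma components_delete_edge_reachable:
  assumes "(adj E')\<^sup>*\<^sup>* a b" shows "components V E' = components V E"
proof -
  have "(adj E)\<^sup>*\<^sup>* x y \<longleftrightarrow> (adj E')\<^sup>*\<^sup>* x y" for x y
  proof
    assume xy: "(adj E)\<^sup>*\<^sup>* x y"
    have "(adj E')\<^sup>*\<^sup>* x y \<or> (adj E')\<^sup>*\<^sup>* a y"
      using reachable_after_delete_edge[OF xy] rtranclp_trans[OF assms, of y] by blast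
    moreover have "(adj E')\<^sup>*\<^sup>* y x \<or> (adj E')\<^sup>*\<^sup>* a x"
      using reachable_after_delete_edge[OF adj_rtranclp_sym[OF xy]] rtranclp_trans[OF assms, of x]
      by blast
    ultimately show "(adj E')\<^sup>*\<^sup>* x y"
      using adj_rtranclp_sym[of E' y x] rtranclp_trans[OF adj_rtranclp_sym[of E' a x], of y] by blast
  next
    assume "(adj E')\<^sup>*\<^sup>* x y"
    then show "(adj E)\<^sup>*\<^sup>* x y" by (rule adj_rtranclp_mono) auto
  qed
  then show ?thesis unfolding components_def by simp
qed

lemma components_delete_edge_subset:
  "component V E' ` V \<subseteq> (component V E ` V - {component V E a}) \<union> {component V E' a, component V E' b}"
proof
  fix S assume "S \<in> component V E' ` V"
  then obtain x where x: "x \<in> V" "S = component V E' x" by auto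
  show "S \<in> (component V E ` V - {component V E a}) \<union> {component V E' a, component V E' b}"
  proof (cases "(adj E)\<^sup>*\<^sup>* a x")
    case True
    then have "(adj E')\<^sup>*\<^sup>* a x \<or> (adj E')\<^sup>*\<^sup>* b x" using reachable_after_delete_edge by blast
    then have "S = component V E' a \<or> S = component V E' b" using x(2) component_eq[of E'] by blast
    then show ?thesis by blast
  next
    case False
    have ab: "(adj E)\<^sup>*\<^sup>* a b" using edge by (simp add: r_into_rtranclp)
    have "(adj E')\<^sup>*\<^sup>* x y" if xy: "(adj E)\<^sup>*\<^sup>* x y" for y
    proof -
      have "\<not> (adj E)\<^sup>*\<^sup>* a y"
        using False rtranclp_trans[OF _ adj_rtranclp_sym[OF xy]] by blast
      moreover then have "\<not> (adj E)\<^sup>*\<^sup>* b y" using rtranclp_trans[OF ab, of y] by blast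
      ultimately show ?thesis
        using reachable_after_delete_edge[OF xy] adj_rtranclp_mono[of E' _ _ E] by blast
    qed
    then have "component V E' x = component V E x"
      unfolding component_def using adj_rtranclp_mono[of E' _ _ E] by blast
    moreover have "component V E x \<noteq> component V E a"
      using False edge_ends(1) unfolding component_def
      by (metis (lifting) adj_rtranclp_sym mem_Collect_eq rtranclp.rtrancl_refl)
    ultimately show ?thesis using x by auto
  qed
qed

lemma card_components_delete_edge: "card (components V E') \<le> card (components V E) + 1"
proof -
  have fin: "finite (component V E ` V)" using simple_graph_finite[OF simple] by simp
  have "card (component V E' ` V) \<le>
      card ((component V E ` V - {component V E a}) \<union> {component V E' a, component V E' b})"
    using components_delete_edge_subset fin by (intro card_mono) auto
  also have "\<dots> \<le> card (component V E ` V - {component V E a}) + card {component V E' a, component V E' b}"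
    by (rule card_Un_le)
  also have "\<dots> \<le> card (component V E ` V - {component V E a}) + 2"
    by (simp add: card_insert_le_m1)
  finally have "card (component V E' ` V) \<le> card (component V E ` V - {component V E a}) + 2" .
  moreover have "card (component V E ` V - {component V E a}) + 1 = card (component V E ` V)"
    using fin edge_ends(1) card_gt_0_iff[of "component V E ` V"] by (auto simp: card_Diff_singleton)
  ultimately show ?thesis unfolding components_eq_image by linarith
qed

end

section \<open>Euler's formula survives edge deletion\<close>

definition euler_char :: "'a set \<Rightarrow> 'a set set \<Rightarrow> ('a \<Rightarrow> 'a \<Rightarrow> 'a) \<Rightarrow> int" where
  "euler_char V E rot =
     int (card V) - int (card E) + int (card (faces V E rot)) + int (card (isolated V E))"

lemma (in edge_deletion) euler_char_delete_edge:
  "euler_char V E rot \<le> euler_char V E' rot' \<and> components V E' = components V E \<or>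
   euler_char V E rot + 2 \<le> euler_char V E' rot'"
proof -
  have "0 < card E" using edge simple_graph_finite_edges[OF simple] card_gt_0_iff by blast
  then have "int (card E') = int (card E) - 1"
    using edge by (simp add: card_Diff_singleton of_nat_diff)
  moreover have "card (isolated V E) \<le> card (isolated V E')"
    using isolated_subset finite_isolated by (rule card_mono[rotated])
  ultimately have cards: "int (card E') = int (card E) - 1" "card (isolated V E) \<le> card (isolated V E')"
    by simp_all
  show ?thesis
  proof (cases "orbit \<sigma> (a, b) = orbit \<sigma> (b, a)")
    case True
    then show ?thesis
      using card_faces_isolated_delete_edge_same_side cards unfolding euler_char_def by simp
  next
    case False
    have "(adj E')\<^sup>*\<^sup>* a b" by (rule adj_rtranclp_sym[OF reachable_if_distinct_sides[OF False]])
    then have "components V E' = components V E" by (rule components_delete_edge_reachable)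
    then show ?thesis
      using card_faces_delete_edge_distinct_sides[OF False] cards unfolding euler_char_def by simp
  qed
qed

lemma euler_char_le_components:
  assumes "simple_graph V E" "rotation_system V E rot"
  shows "euler_char V E rot \<le> 2 * int (card (components V E))"
  using assms
proof (induction "card E" arbitrary: E rot)
  case 0
  then have E: "E = {}" using simple_graph_finite_edges[OF "0.prems"(1)] by simp
  then have "faces V E rot = {}" "isolated V E = V"
    unfolding faces_def darts_def isolated_def neighbours_def by auto
  moreover have "components V E = (\<lambda>x. {x}) ` V"
  proof -
    have "(adj E)\<^sup>*\<^sup>* x y \<longleftrightarrow> x = y" for x y
    proof
      show "(adj E)\<^sup>*\<^sup>* x y \<Longrightarrow> x = y" by (induction rule: rtranclp_induct) (auto simp: E)
    qed simp
    then show ?thesis unfolding components_def by auto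
  qed
  moreover have "card ((\<lambda>x. {x}) ` V) = card V" by (rule card_image) (simp add: inj_on_def)
  ultimately show ?case unfolding euler_char_def E by simp
next
  case (Suc n)
  then obtain e where "e \<in> E" by fastforce
  then obtain a b where ab: "{a, b} \<in> E" using simple_graph_edgeE[OF Suc.prems(1)] by metis
  interpret edge_deletion V E rot a b using Suc.prems ab by unfold_locales
  have "n = card E'"
    using Suc.hyps(2) ab simple_graph_finite_edges[OF simple] by simp
  then have "euler_char V E' rot' \<le> 2 * int (card (components V E'))"
    using Suc.hyps(1) simple' rotation' by blast
  then show ?case
    using euler_char_delete_edge card_components_delete_edge by (elim disjE conjE) simp_all
qed

lemma plane_rotation_delete_edge:
  assumes "simple_graph V E" "plane_rotation V E rot" "{a, b} \<in> E"
  shows "plane_rotation V (E - {{a, b}}) (delete_edge_rotation rot a b)"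
proof -
  have rs: "rotation_system V E rot" using assms(2) unfolding plane_rotation_def by simp
  interpret edge_deletion V E rot a b using assms(1,3) rs by unfold_locales
  have "euler_char V E rot = 2 * int (card (components V E))"
    using assms(2) unfolding plane_rotation_def euler_char_def by simp
  moreover have "euler_char V E' rot' \<le> 2 * int (card (components V E'))"
    by (rule euler_char_le_components[OF simple' rotation'])
  ultimately have "euler_char V E' rot' = 2 * int (card (components V E'))"
    using euler_char_delete_edge card_components_delete_edge by (elim disjE conjE) simp_all
  then show ?thesis using rotation' unfolding plane_rotation_def euler_char_def by simp
qed

section \<open>Transporting a graph along an injection\<close>

lemma cyclic_perm_on_image:
  assumes "cyclic_perm_on r N" "inj_on h N" "\<And>x. x \<in> N \<Longrightarrow> r' (h x) = h (r x)"
  shows "cyclic_perm_on r' (h ` N)"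
proof -
  have maps: "\<And>x. x \<in> N \<Longrightarrow> r x \<in> N" and inj_r: "inj_on r N"
    and conn: "\<And>x y. x \<in> N \<Longrightarrow> y \<in> N \<Longrightarrow> \<exists>n. (r ^^ n) x = y"
    using assms(1) unfolding cyclic_perm_on_def by auto
  have pow: "(r' ^^ n) (h x) = h ((r ^^ n) x) \<and> (r ^^ n) x \<in> N" if "x \<in> N" for x n
    by (induction n) (use that maps assms(3) in auto)
  show ?thesis
    unfolding cyclic_perm_on_def
  proof (intro conjI ballI)
    show "r' y \<in> h ` N" if "y \<in> h ` N" for y using that maps assms(3) by auto
    show "inj_on r' (h ` N)"
    proof (rule inj_onI)
      fix p q assume "p \<in> h ` N" "q \<in> h ` N" "r' p = r' q"
      then obtain x y where "x \<in> N" "y \<in> N" "p = h x" "q = h y" "h (r x) = h (r y)"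
        using assms(3) by auto
      then show "p = q" using assms(2) inj_r maps by (metis inj_onD)
    qed
    show "\<exists>n. (r' ^^ n) x = y" if "x \<in> h ` N" "y \<in> h ` N" for x y
      using that conn pow by blast
  qed
qed

locale graph_embedding =
  fixes V :: "'a set" and E :: "'a set set" and f :: "'a \<Rightarrow> 'b"
  assumes simple: "simple_graph V E" and inj: "inj_on f V"
begin

abbreviation "V\<^sub>f \<equiv> f ` V"
abbreviation "E\<^sub>f \<equiv> (\<lambda>e. f ` e) ` E"
abbreviation "g \<equiv> inv_into V f"

lemma edge_subset: "e \<in> E \<Longrightarrow> e \<subseteq> V"
  using simple_graph_edgeE[OF simple] by blast

lemma image_eq_iff: "X \<subseteq> V \<Longrightarrow> Y \<subseteq> V \<Longrightarrow> f ` X = f ` Y \<longleftrightarrow> X = Y"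
  using inj by (simp add: inj_on_image_eq_iff)

lemma image_mem_edges_iff:
  assumes "X \<subseteq> V" shows "f ` X \<in> E\<^sub>f \<longleftrightarrow> X \<in> E"
proof
  assume "f ` X \<in> E\<^sub>f"
  then obtain e where "e \<in> E" "f ` X = f ` e" by blast
  then show "X \<in> E" using image_eq_iff[OF assms edge_subset] by simp
qed simp

lemma image_edge_iff: "x \<in> V \<Longrightarrow> y \<in> V \<Longrightarrow> {f x, f y} \<in> E\<^sub>f \<longleftrightarrow> {x, y} \<in> E"
  using image_mem_edges_iff[of "{x, y}"] by simp

lemma inv_into_image: "p \<in> V\<^sub>f \<Longrightarrow> g p \<in> V \<and> f (g p) = p"
  by (simp add: inv_into_into f_inv_into_f)

lemma simple_graph_image: "simple_graph V\<^sub>f E\<^sub>f"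
  unfolding simple_graph_def
proof (intro conjI ballI)
  show "finite V\<^sub>f" using simple_graph_finite[OF simple] by simp
  fix e' assume "e' \<in> E\<^sub>f"
  then obtain e where e: "e \<in> E" "e' = f ` e" by blast
  then obtain x y where "e = {x, y}" "x \<noteq> y" "x \<in> V" "y \<in> V"
    using simple_graph_edgeE[OF simple] by metis
  moreover then have "f x \<noteq> f y" using inj by (meson inj_onD)
  ultimately show "\<exists>x y. e' = {x, y} \<and> x \<noteq> y \<and> x \<in> V\<^sub>f \<and> y \<in> V\<^sub>f"
    using e by blast
qed

lemma neighbours_image: "z \<in> V \<Longrightarrow> neighbours V\<^sub>f E\<^sub>f (f z) = f ` neighbours V E z"
  unfolding neighbours_def using image_edge_iff inj by (auto simp: inj_on_eq_iff)

lemma degree_image: "z \<in> V \<Longrightarrow> degree V\<^sub>f E\<^sub>f (f z) = degree V E z"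
  unfolding degree_def neighbours_image
  using inj_on_subset[OF inj neighbours_subset] by (simp add: card_image)

lemma max_degree_le_image: "max_degree_le V E k \<Longrightarrow> max_degree_le V\<^sub>f E\<^sub>f k"
  unfolding max_degree_le_def using degree_image by auto

lemma card_vertices_image: "card V\<^sub>f = card V"
  using inj by (simp add: card_image)

lemma card_edges_image: "card E\<^sub>f = card E"
proof -
  have "inj_on (\<lambda>e. f ` e) E" unfolding inj_on_def using image_eq_iff edge_subset by blast
  then show ?thesis by (simp add: card_image)
qed

lemma has_4fan_image_imp: "has_4fan V\<^sub>f E\<^sub>f \<Longrightarrow> has_4fan V E"
proof -
  assume "has_4fan V\<^sub>f E\<^sub>f"
  then obtain c u1 u2 u3 u4 u5 where fan: "{c, u1, u2, u3, u4, u5} \<subseteq> V\<^sub>f \<and> distinct [c, u1, u2, u3, u4, u5] \<and>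
     {c, u1} \<in> E\<^sub>f \<and> {c, u2} \<in> E\<^sub>f \<and> {c, u3} \<in> E\<^sub>f \<and> {c, u4} \<in> E\<^sub>f \<and> {c, u5} \<in> E\<^sub>f \<and>
     {u1, u2} \<in> E\<^sub>f \<and> {u2, u3} \<in> E\<^sub>f \<and> {u3, u4} \<in> E\<^sub>f \<and> {u4, u5} \<in> E\<^sub>f"
    unfolding has_4fan_def by (elim exE) (erule that)
  then have V: "{c, u1, u2, u3, u4, u5} \<subseteq> V\<^sub>f" and dist: "distinct [c, u1, u2, u3, u4, u5]"
    and E: "{c, u1} \<in> E\<^sub>f" "{c, u2} \<in> E\<^sub>f" "{c, u3} \<in> E\<^sub>f" "{c, u4} \<in> E\<^sub>f" "{c, u5} \<in> E\<^sub>f"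
      "{u1, u2} \<in> E\<^sub>f" "{u2, u3} \<in> E\<^sub>f" "{u3, u4} \<in> E\<^sub>f" "{u4, u5} \<in> E\<^sub>f"
    by (simp_all only:)
  have pre: "g p \<in> V" "f (g p) = p" if "p \<in> {c, u1, u2, u3, u4, u5}" for p
  proof -
    have "p \<in> V\<^sub>f" using that V by (rule subsetD[rotated])
    then show "g p \<in> V" "f (g p) = p" using inv_into_image by simp_all
  qed
  have edge: "{g p, g q} \<in> E" if "{p, q} \<in> E\<^sub>f" "p \<in> {c, u1, u2, u3, u4, u5}" "q \<in> {c, u1, u2, u3, u4, u5}" for p q
    using that image_edge_iff[of "g p" "g q"] pre by simp
  have "map f (map g [c, u1, u2, u3, u4, u5]) = [c, u1, u2, u3, u4, u5]" using pre by simp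
  then have "distinct (map g [c, u1, u2, u3, u4, u5])" using dist by (metis distinct_map)
  then have "distinct [g c, g u1, g u2, g u3, g u4, g u5]" by (simp only: list.map)
  moreover have "{g c, g u1} \<in> E" "{g c, g u2} \<in> E" "{g c, g u3} \<in> E" "{g c, g u4} \<in> E"
    "{g c, g u5} \<in> E" "{g u1, g u2} \<in> E" "{g u2, g u3} \<in> E" "{g u3, g u4} \<in> E" "{g u4, g u5} \<in> E"
    by (rule edge; (rule E | simp))+
  moreover have "{g c, g u1, g u2, g u3, g u4, g u5} \<subseteq> V" using pre by simp
  ultimately have fan: "{g c, g u1, g u2, g u3, g u4, g u5} \<subseteq> V \<and> distinct [g c, g u1, g u2, g u3, g u4, g u5] \<and>
     {g c, g u1} \<in> E \<and> {g c, g u2} \<in> E \<and> {g c, g u3} \<in> E \<and> {g c, g u4} \<in> E \<and> {g c, g u5} \<in> E \<and>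
     {g u1, g u2} \<in> E \<and> {g u2, g u3} \<in> E \<and> {g u3, g u4} \<in> E \<and> {g u4, g u5} \<in> E"
    by (intro conjI)
  show "has_4fan V E" unfolding has_4fan_def by (intro exI) (rule fan)
qed

lemma total_colouring_pullback:
  assumes "total_colouring V\<^sub>f E\<^sub>f k cv ce"
  shows "total_colouring V E k (cv \<circ> f) (\<lambda>e. ce (f ` e))"
  unfolding total_colouring_def
proof (intro conjI ballI impI)
  note c = assms[unfolded total_colouring_def]
  show "(cv \<circ> f) v \<in> {1..k}" if "v \<in> V" for v using c that by simp
  show "ce (f ` e) \<in> {1..k}" if "e \<in> E" for e using c that by simp
  show "(cv \<circ> f) x \<noteq> (cv \<circ> f) y" if "x \<in> V" "y \<in> V" "x \<noteq> y \<and> {x, y} \<in> E" for x y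
    using c that inj image_edge_iff by (simp add: inj_on_eq_iff)
  show "ce (f ` e) \<noteq> ce (f ` e')" if "e \<in> E" "e' \<in> E" "e \<noteq> e' \<and> e \<inter> e' \<noteq> {}" for e e'
  proof -
    have "f ` e \<noteq> f ` e'" using that image_eq_iff[OF edge_subset edge_subset] by simp
    moreover have "f ` e \<inter> f ` e' \<noteq> {}" using that by blast
    ultimately show ?thesis using c that by simp
  qed
  show "(cv \<circ> f) v \<noteq> ce (f ` e)" if "e \<in> E" "v \<in> e" for e v
    using c that by simp
qed

definition rot\<^sub>f :: "('a \<Rightarrow> 'a \<Rightarrow> 'a) \<Rightarrow> 'b \<Rightarrow> 'b \<Rightarrow> 'b" where
  "rot\<^sub>f rot x y = f (rot (g x) (g y))"

lemma rot\<^sub>f_image: "z \<in> V \<Longrightarrow> x \<in> V \<Longrightarrow> rot\<^sub>f rot (f z) (f x) = f (rot z x)"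
  unfolding rot\<^sub>f_def using inj by simp

lemma rotation_system_image:
  assumes "rotation_system V E rot" shows "rotation_system V\<^sub>f E\<^sub>f (rot\<^sub>f rot)"
  unfolding rotation_system_iff
proof
  fix z' assume "z' \<in> V\<^sub>f"
  then obtain z where z: "z \<in> V" "z' = f z" by blast
  have cyc: "cyclic_perm_on (rot z) (neighbours V E z)"
    using assms z(1) by (simp add: rotation_system_iff)
  have "rot\<^sub>f rot (f z) (f x) = f (rot z x)" if "x \<in> neighbours V E z" for x
    using rot\<^sub>f_image[OF z(1) subsetD[OF neighbours_subset that]] .
  then have "cyclic_perm_on (rot\<^sub>f rot (f z)) (f ` neighbours V E z)"
    by (rule cyclic_perm_on_image[OF cyc inj_on_subset[OF inj neighbours_subset]])
  then show "cyclic_perm_on (rot\<^sub>f rot z') (neighbours V\<^sub>f E\<^sub>f z')"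
    using neighbours_image z by simp
qed

lemma darts_image: "darts V\<^sub>f E\<^sub>f = map_prod f f ` darts V E"
proof
  show "darts V\<^sub>f E\<^sub>f \<subseteq> map_prod f f ` darts V E"
  proof
    fix d assume d: "d \<in> darts V\<^sub>f E\<^sub>f"
    then obtain x y where "d = (f x, f y)" "x \<in> V" "y \<in> V" by (auto simp: darts_def)
    with d show "d \<in> map_prod f f ` darts V E" by (force simp: mem_darts_iff image_edge_iff)
  qed
  show "map_prod f f ` darts V E \<subseteq> darts V\<^sub>f E\<^sub>f"
    using inj image_edge_iff by (auto simp: mem_darts_iff inj_on_eq_iff)
qed

lemma card_faces_image:
  assumes "rotation_system V E rot"
  shows "card (faces V\<^sub>f E\<^sub>f (rot\<^sub>f rot)) = card (faces V E rot)"
proof -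
  let ?F = "map_prod f f"
  have step: "face_step (rot\<^sub>f rot) (?F d) = ?F (face_step rot d)" if "d \<in> darts V E" for d
    using that rot\<^sub>f_image by (cases d) (auto simp: face_step_def mem_darts_iff)
  have pow: "(face_step (rot\<^sub>f rot) ^^ n) (?F d) = ?F ((face_step rot ^^ n) d)"
    if "d \<in> darts V E" for d n
    by (induction n) (simp_all add: step face_step_in_darts[OF simple assms] finite_injection.funpow_in
        finite_injection_face_step[OF simple assms] that)
  have face: "face (rot\<^sub>f rot) (?F d) = ?F ` face rot d" if "d \<in> darts V E" for d
  proof -
    have "face (rot\<^sub>f rot) (?F d) = {?F ((face_step rot ^^ n) d) | n. True}"
      unfolding face_def by (simp add: pow[OF that])
    also have "\<dots> = ?F ` face rot d" unfolding face_def by (auto intro: image_eqI) (metis map_prod_simp)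
    finally show ?thesis .
  qed
  have "faces V\<^sub>f E\<^sub>f (rot\<^sub>f rot) = image ?F ` faces V E rot"
    unfolding faces_def darts_image image_image using face by simp
  moreover have "inj_on ?F (darts V E)"
    using inj by (auto simp: inj_on_def mem_darts_iff)
  then have "inj_on (image ?F) (faces V E rot)"
    using faces_eq_orbits[OF simple assms] finite_injection.orbit_subset[OF finite_injection_face_step[OF simple assms]]
    by (auto simp: inj_on_def inj_on_image_eq_iff)
  ultimately show ?thesis by (simp add: card_image)
qed

lemma card_isolated_image: "card (isolated V\<^sub>f E\<^sub>f) = card (isolated V E)"
proof -
  have "isolated V\<^sub>f E\<^sub>f = f ` isolated V E"
    unfolding isolated_def using neighbours_image by auto
  moreover have "isolated V E \<subseteq> V" unfolding isolated_def by auto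
  ultimately show ?thesis using inj_on_subset[OF inj] by (simp add: card_image)
qed

lemma reachable_image_iff:
  assumes "x \<in> V"
  shows "(adj E\<^sub>f)\<^sup>*\<^sup>* (f x) w \<longleftrightarrow> (\<exists>y\<in>V. w = f y \<and> (adj E)\<^sup>*\<^sup>* x y)"
proof
  assume "(adj E\<^sub>f)\<^sup>*\<^sup>* (f x) w"
  then show "\<exists>y\<in>V. w = f y \<and> (adj E)\<^sup>*\<^sup>* x y"
  proof (induction rule: rtranclp_induct)
    case (step w w')
    then obtain y where y: "y \<in> V" "w = f y" "(adj E)\<^sup>*\<^sup>* x y" by blast
    obtain y' where y': "y' \<in> V" "w' = f y'" using step(2) edge_vertices[OF simple_graph_image] by blast
    have "{y, y'} \<in> E" using step(2) y y' image_edge_iff by simp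
    then show ?case using y y' by (auto intro: rtranclp.rtrancl_into_rtrancl)
  qed (use assms in blast)
next
  assume "\<exists>y\<in>V. w = f y \<and> (adj E)\<^sup>*\<^sup>* x y"
  then obtain y where y: "w = f y" "(adj E)\<^sup>*\<^sup>* x y" by blast
  from y(2) have "(adj E\<^sub>f)\<^sup>*\<^sup>* (f x) (f y)"
  proof (induction rule: rtranclp_induct)
    case (step y z)
    have "(\<lambda>e. f ` e) {y, z} \<in> E\<^sub>f" using step(2) by (rule imageI)
    then have "{f y, f z} \<in> E\<^sub>f" by simp
    then show ?case using step.IH by (auto intro: rtranclp.rtrancl_into_rtrancl)
  qed simp
  then show "(adj E\<^sub>f)\<^sup>*\<^sup>* (f x) w" using y(1) by simp
qed

lemma card_components_image: "card (components V\<^sub>f E\<^sub>f) = card (components V E)"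
proof -
  have comp: "components V0 E0 = (\<lambda>x. {y \<in> V0. (adj E0)\<^sup>*\<^sup>* x y}) ` V0" for V0 E0
    unfolding components_def by blast
  have "{y \<in> V\<^sub>f. (adj E\<^sub>f)\<^sup>*\<^sup>* (f x) y} = f ` {y \<in> V. (adj E)\<^sup>*\<^sup>* x y}" if "x \<in> V" for x
    using reachable_image_iff[OF that] by auto
  then have "components V\<^sub>f E\<^sub>f = image f ` components V E"
    unfolding comp image_image by (rule image_cong[OF refl])
  moreover have "inj_on (image f) (components V E)"
    unfolding components_def using image_eq_iff by (auto simp: inj_on_def)
  ultimately show ?thesis by (simp add: card_image)
qed

lemma planar_image: "planar V E \<Longrightarrow> planar V\<^sub>f E\<^sub>f"
  unfolding planar_def plane_rotation_def
  using rotation_system_image card_faces_image card_isolated_image card_components_image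
    card_vertices_image card_edges_image by metis

end

section \<open>Deleting an edge from a minimal counterexample\<close>

lemma degree_mono: "simple_graph V E \<Longrightarrow> E' \<subseteq> E \<Longrightarrow> degree V E' z \<le> degree V E z"
  unfolding degree_def
  by (rule card_mono[OF finite_neighbours]) (auto simp: neighbours_def)

lemma has_4fan_mono: "has_4fan V E' \<Longrightarrow> E' \<subseteq> E \<Longrightarrow> has_4fan V E"
  unfolding has_4fan_def by (elim exE) (meson subsetD)

lemma minimal_counterexample_delete_edge_colourable:
  assumes mc: "minimal_counterexample V E" and ab: "{a, b} \<in> E"
  shows "total_colourable V (E - {{a, b}}) 9"
proof -
  let ?E' = "E - {{a, b}}"
  have simple_E: "simple_graph V E" and "planar V E" "max_degree_eq V E 8" "\<not> has_4fan V E"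
    using mc unfolding minimal_counterexample_def by auto
  then have simple': "simple_graph V ?E'" and "planar V ?E'" and "max_degree_le V ?E' 8"
    and "\<not> has_4fan V ?E'"
    using simple_graph_delete_edges plane_rotation_delete_edge[OF simple_E _ ab]
      degree_mono[OF simple_E, of ?E'] has_4fan_mono[of V ?E' E]
    unfolding planar_def max_degree_eq_def max_degree_le_def by (fastforce intro: order_trans)+
  obtain f :: "'a \<Rightarrow> nat" where f: "inj_on f V"
    using finite_imp_inj_to_nat_seg[OF simple_graph_finite[OF simple_E]] by blast
  interpret graph_embedding V ?E' f using simple' f by unfold_locales
  have "card V\<^sub>f + card E\<^sub>f < card V + card E"
    using card_vertices_image card_edges_image card_Diff1_less[OF simple_graph_finite_edges[OF simple_E] ab]
    by simp
  then have "total_colourable V\<^sub>f E\<^sub>f 9"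
    using mc simple_graph_image planar_image max_degree_le_image has_4fan_image_imp
      \<open>planar V ?E'\<close> \<open>max_degree_le V ?E' 8\<close> \<open>\<not> has_4fan V ?E'\<close>
    unfolding minimal_counterexample_def by blast
  then show ?thesis
    using total_colouring_pullback unfolding total_colourable_def by blast
qed

section \<open>Partial total colourings\<close>

definition incident :: "'a set set \<Rightarrow> 'a \<Rightarrow> 'a set set" where
  "incident E z = {e \<in> E. z \<in> e}"

lemma mem_incident_iff [simp]: "e \<in> incident E z \<longleftrightarrow> e \<in> E \<and> z \<in> e"
  unfolding incident_def by simp

lemma incident_subset_neighbour_edges:
  assumes "simple_graph V E" shows "incident E z \<subseteq> (\<lambda>y. {z, y}) ` neighbours V E z"
proof
  fix e assume "e \<in> incident E z"
  then obtain p q where "e = {p, q}" "p \<noteq> q" "p \<in> V" "q \<in> V" "z \<in> {p, q}" "{p, q} \<in> E"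
    using simple_graph_edgeE[OF assms] by (metis mem_incident_iff)
  then show "e \<in> (\<lambda>y. {z, y}) ` neighbours V E z"
    by (auto simp: mem_neighbours_iff insert_commute)
qed

lemma finite_incident: "simple_graph V E \<Longrightarrow> finite (incident E z)"
  unfolding incident_def by (rule finite_subset[of _ E]) (auto dest: simple_graph_finite_edges)

lemma card_incident_le_degree:
  assumes "simple_graph V E" shows "card (incident E z) \<le> degree V E z"
proof -
  have "card (incident E z) \<le> card ((\<lambda>y. {z, y}) ` neighbours V E z)"
    using finite_neighbours[OF assms] incident_subset_neighbour_edges[OF assms] by (intro card_mono) auto
  also have "\<dots> \<le> degree V E z"
    unfolding degree_def using finite_neighbours[OF assms] by (rule card_image_le)
  finally show ?thesis .
qed

text \<open>A partial total colouring leaves the vertices in \<open>X\<close> and the edges of colour \<open>0\<close>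
  uncoloured; the colours used are \<open>1..k\<close>.\<close>

definition partial_total_colouring ::
  "'a set \<Rightarrow> 'a set set \<Rightarrow> nat \<Rightarrow> 'a set \<Rightarrow> ('a \<Rightarrow> nat) \<Rightarrow> ('a set \<Rightarrow> nat) \<Rightarrow> bool" where
  "partial_total_colouring V E k X cv ce \<longleftrightarrow>
     (\<forall>e\<in>E. ce e \<le> k) \<and> (\<forall>z\<in>V - X. cv z \<in> {1..k}) \<and>
     (\<forall>p\<in>V - X. \<forall>q\<in>V - X. p \<noteq> q \<and> {p, q} \<in> E \<longrightarrow> cv p \<noteq> cv q) \<and>
     (\<forall>z\<in>V. \<forall>e\<in>incident E z. \<forall>e'\<in>incident E z. e \<noteq> e' \<and> ce e \<noteq> 0 \<longrightarrow> ce e \<noteq> ce e') \<and>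
     (\<forall>z\<in>V - X. \<forall>e\<in>incident E z. cv z \<noteq> ce e)"

lemma partial_total_colouringI:
  assumes "\<And>e. e \<in> E \<Longrightarrow> ce e \<le> k" "\<And>z. z \<in> V - X \<Longrightarrow> cv z \<in> {1..k}"
    and "\<And>p q. p \<in> V - X \<Longrightarrow> q \<in> V - X \<Longrightarrow> p \<noteq> q \<Longrightarrow> {p, q} \<in> E \<Longrightarrow> cv p \<noteq> cv q"
    and "\<And>z e e'. z \<in> V \<Longrightarrow> e \<in> incident E z \<Longrightarrow> e' \<in> incident E z \<Longrightarrow> e \<noteq> e' \<Longrightarrow> ce e \<noteq> 0
      \<Longrightarrow> ce e \<noteq> ce e'"
    and "\<And>z e. z \<in> V - X \<Longrightarrow> e \<in> incident E z \<Longrightarrow> cv z \<noteq> ce e"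
  shows "partial_total_colouring V E k X cv ce"
  using assms unfolding partial_total_colouring_def by blast

lemma partial_total_colouringD:
  assumes "partial_total_colouring V E k X cv ce"
  shows "e \<in> E \<Longrightarrow> ce e \<le> k" "z \<in> V - X \<Longrightarrow> cv z \<in> {1..k}"
    and "p \<in> V - X \<Longrightarrow> q \<in> V - X \<Longrightarrow> p \<noteq> q \<Longrightarrow> {p, q} \<in> E \<Longrightarrow> cv p \<noteq> cv q"
    and "z \<in> V \<Longrightarrow> e \<in> incident E z \<Longrightarrow> e' \<in> incident E z \<Longrightarrow> e \<noteq> e' \<Longrightarrow> ce e \<noteq> 0
      \<Longrightarrow> ce e \<noteq> ce e'"
    and "z \<in> V - X \<Longrightarrow> e \<in> incident E z \<Longrightarrow> cv z \<noteq> ce e"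
  using assms unfolding partial_total_colouring_def Ball_def by simp_all

lemma total_colouringD:
  assumes "total_colouring V E k cv ce"
  shows "z \<in> V \<Longrightarrow> cv z \<in> {1..k}" "e \<in> E \<Longrightarrow> ce e \<in> {1..k}"
    and "p \<in> V \<Longrightarrow> q \<in> V \<Longrightarrow> p \<noteq> q \<Longrightarrow> {p, q} \<in> E \<Longrightarrow> cv p \<noteq> cv q"
    and "e \<in> E \<Longrightarrow> e' \<in> E \<Longrightarrow> e \<noteq> e' \<Longrightarrow> z \<in> e \<Longrightarrow> z \<in> e' \<Longrightarrow> ce e \<noteq> ce e'"
    and "e \<in> E \<Longrightarrow> z \<in> e \<Longrightarrow> cv z \<noteq> ce e"
  using assms unfolding total_colouring_def Ball_def by (simp_all, blast)

lemma partial_total_colouring_delete_edge: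
  assumes tc: "total_colouring V (E - {{u, v}}) k cv ce" and "u \<in> X"
  shows "partial_total_colouring V E k X cv (ce({u, v} := 0))"
proof (rule partial_total_colouringI)
  note D = total_colouringD[OF tc]
  show "(ce({u, v} := 0)) e \<le> k" if "e \<in> E" for e using D(2)[of e] that by auto
  show "cv z \<in> {1..k}" if "z \<in> V - X" for z using D(1) that by auto
  show "cv p \<noteq> cv q" if "p \<in> V - X" "q \<in> V - X" "p \<noteq> q" "{p, q} \<in> E" for p q
    using D(3)[of p q] that \<open>u \<in> X\<close> by (auto simp: doubleton_eq_iff)
  show "(ce({u, v} := 0)) e \<noteq> (ce({u, v} := 0)) e'"
    if "e \<in> incident E z" "e' \<in> incident E z" "e \<noteq> e'" "(ce({u, v} := 0)) e \<noteq> 0" for z e e'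
  proof (cases "e' = {u, v}")
    case False
    moreover have "e \<noteq> {u, v}" using that(4) by auto
    ultimately show ?thesis using that(1-3) D(4)[of e e' z] by simp
  qed (use that in auto)
  show "cv z \<noteq> (ce({u, v} := 0)) e" if "z \<in> V - X" "e \<in> incident E z" for z e
  proof (cases "e = {u, v}")
    case True
    then show ?thesis using D(1)[of z] that by auto
  qed (use that D(5)[of e z] in auto)
qed

lemma partial_total_colouring_uncolour_edge:
  assumes "partial_total_colouring V E k X cv ce"
  shows "partial_total_colouring V E k X cv (ce(e := 0))"
proof (rule partial_total_colouringI)
  note D = partial_total_colouringD[OF assms]
  show "(ce(e := 0)) e1 \<noteq> (ce(e := 0)) e2"
    if "z \<in> V" "e1 \<in> incident E z" "e2 \<in> incident E z" "e1 \<noteq> e2" "(ce(e := 0)) e1 \<noteq> 0"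
    for z e1 e2
  proof -
    have "e1 \<noteq> e" using that(5) by auto
    then show ?thesis using that D(4)[of z e1 e2] by simp
  qed
  show "cv z \<noteq> (ce(e := 0)) e1" if "z \<in> V - X" "e1 \<in> incident E z" for z e1
    using that D(2)[of z] D(5)[of z e1] by (cases "e1 = e") auto
qed (use partial_total_colouringD[OF assms] in auto)

lemma partial_total_colouring_colour_edge:
  assumes col: "partial_total_colouring V E k X cv ce" and "c \<in> {1..k}"
    and free_p: "\<And>e'. e' \<in> incident E p \<Longrightarrow> e' \<noteq> {p, q} \<Longrightarrow> ce e' \<noteq> c"
    and free_q: "\<And>e'. e' \<in> incident E q \<Longrightarrow> e' \<noteq> {p, q} \<Longrightarrow> ce e' \<noteq> c"
    and "p \<notin> X \<Longrightarrow> cv p \<noteq> c" "q \<notin> X \<Longrightarrow> cv q \<noteq> c"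
  shows "partial_total_colouring V E k X cv (ce({p, q} := c))"
proof (rule partial_total_colouringI)
  note D = partial_total_colouringD[OF col]
  have free: "ce e' \<noteq> c" if "z \<in> {p, q}" "e' \<in> incident E z" "e' \<noteq> {p, q}" for z e'
    using that free_p free_q by blast
  show "(ce({p, q} := c)) e1 \<le> k" if "e1 \<in> E" for e1 using D(1) that \<open>c \<in> {1..k}\<close> by auto
  show "(ce({p, q} := c)) e1 \<noteq> (ce({p, q} := c)) e2"
    if "z \<in> V" "e1 \<in> incident E z" "e2 \<in> incident E z" "e1 \<noteq> e2" "(ce({p, q} := c)) e1 \<noteq> 0"
    for z e1 e2
    using that D(4)[of z e1 e2] free[of z e1] free[of z e2] by (auto split: if_splits)
  show "cv z \<noteq> (ce({p, q} := c)) e1" if "z \<in> V - X" "e1 \<in> incident E z" for z e1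
    using that D(5) assms(5,6) by auto
qed (use partial_total_colouringD[OF col] in auto)

lemma partial_total_colouring_colour_vertex:
  assumes simple: "simple_graph V E" and col: "partial_total_colouring V E k (insert z X) cv ce"
    and "z \<in> V" "z \<notin> X" and deg: "2 * degree V E z < k"
  obtains c where "partial_total_colouring V E k X (cv(z := c)) ce"
proof -
  let ?S = "cv ` neighbours V E z \<union> ce ` incident E z"
  have "card ?S \<le> card (cv ` neighbours V E z) + card (ce ` incident E z)" by (rule card_Un_le)
  also have "\<dots> \<le> card (neighbours V E z) + card (incident E z)"
    using finite_neighbours[OF simple] finite_incident[OF simple] by (intro add_mono card_image_le)
  also have "\<dots> < k"
    using card_incident_le_degree[OF simple, of z] deg unfolding degree_def by linarith
  finally have less: "card ?S < card {1..k}" by simp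
  have "\<not> {1..k} \<subseteq> ?S"
  proof
    assume "{1..k} \<subseteq> ?S"
    then have "card {1..k} \<le> card ?S"
      using finite_neighbours[OF simple] finite_incident[OF simple] by (intro card_mono) auto
    with less show False by simp
  qed
  then obtain c where c: "c \<in> {1..k}" "c \<notin> ?S" by blast
  have "partial_total_colouring V E k X (cv(z := c)) ce"
    using col c \<open>z \<in> V\<close> \<open>z \<notin> X\<close> unfolding partial_total_colouring_def
    by (auto simp: mem_neighbours_iff insert_commute)
  then show ?thesis by (rule that)
qed

lemma partial_total_colouring_complete:
  assumes simple: "simple_graph V E" and col: "partial_total_colouring V E k {} cv ce"
    and coloured: "\<forall>e\<in>E. ce e \<noteq> 0"
  shows "total_colouring V E k cv ce"
  unfolding total_colouring_def
proof (intro conjI ballI impI)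
  note D = partial_total_colouringD[OF col, unfolded Diff_empty]
  show "cv z \<in> {1..k}" if "z \<in> V" for z using D(2) that .
  show "ce e \<in> {1..k}" if "e \<in> E" for e using D(1)[OF that] coloured that by auto
  show "cv p \<noteq> cv q" if "p \<in> V" "q \<in> V" "p \<noteq> q \<and> {p, q} \<in> E" for p q using D(3) that by blast
  show "ce e \<noteq> ce e'" if e: "e \<in> E" "e' \<in> E" "e \<noteq> e' \<and> e \<inter> e' \<noteq> {}" for e e'
  proof -
    obtain z where "z \<in> e" "z \<in> e'" using e(3) by blast
    moreover then have "z \<in> V" using simple_graph_edgeE[OF simple e(1)] by auto
    ultimately show ?thesis using D(4)[of z e e'] coloured e by simp
  qed
  show "cv z \<noteq> ce e" if "e \<in> E" "z \<in> e" for e z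
    using D(5)[of z e] simple_graph_edgeE[OF simple that(1)] that by auto
qed

section \<open>Recolouring around a vertex of degree 2\<close>

locale configuration =
  fixes V :: "'a set" and E :: "'a set set" and v w x y u u' :: 'a
  assumes simple: "simple_graph V E" and max_degree: "max_degree_le V E 8"
    and neighbours_w: "neighbours V E w = {v, x, y}" and distinct_vxy: "distinct [v, x, y]"
    and neighbours_u: "neighbours V E u = {v, u'}" and u'_ne_v: "u' \<noteq> v" and u_ne_w: "u \<noteq> w"
    and edge_vx: "{v, x} \<in> E" and edge_vy: "{v, y} \<in> E" and w_in_V: "w \<in> V" and u_in_V: "u \<in> V"
begin

lemma neighbour_facts: "v \<in> neighbours V E w" "x \<in> neighbours V E w" "y \<in> neighbours V E w"
  "v \<in> neighbours V E u" "u' \<in> neighbours V E u"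
  using neighbours_w neighbours_u by simp_all

lemma vertices: "v \<in> V" "x \<in> V" "y \<in> V" "u' \<in> V"
  using neighbour_facts by (simp_all add: mem_neighbours_iff)

lemma distinct_vertices: "v \<noteq> x" "v \<noteq> y" "x \<noteq> y" "w \<noteq> v" "w \<noteq> x" "w \<noteq> y" "u \<noteq> v" "u \<noteq> u'"
  using distinct_vxy neighbour_facts by (simp_all add: mem_neighbours_iff) blast+

lemma edges: "{v, w} \<in> E" "{w, x} \<in> E" "{w, y} \<in> E" "{u, v} \<in> E" "{u, u'} \<in> E"
  using neighbour_facts by (simp_all add: mem_neighbours_iff insert_commute)

lemma incident_w: "incident E w = {{v, w}, {w, x}, {w, y}}"
proof
  show "incident E w \<subseteq> {{v, w}, {w, x}, {w, y}}"
    using incident_subset_neighbour_edges[OF simple, of w] neighbours_w by (auto simp: insert_commute)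
qed (use edges in auto)

lemma incident_u: "incident E u = {{u, v}, {u, u'}}"
proof
  show "incident E u \<subseteq> {{u, v}, {u, u'}}"
    using incident_subset_neighbour_edges[OF simple, of u] neighbours_u by auto
qed (use edges in auto)

lemma u_ne_x_y: "u' \<noteq> w \<Longrightarrow> u \<noteq> x \<and> u \<noteq> y"
  using neighbours_u edges(2,3) edge_imp_neighbour[OF simple] distinct_vertices(4)
  by (metis insert_commute insert_iff singletonD)

lemma swap_xy: "configuration V E v w y x u u'"
  using simple max_degree neighbours_w distinct_vxy neighbours_u u'_ne_v u_ne_w edge_vx edge_vy
    w_in_V u_in_V
  by unfold_locales (auto simp: insert_commute)

end

locale configuration_colouring = configuration +
  fixes cv :: "'a \<Rightarrow> nat" and ce :: "'a set \<Rightarrow> nat"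
  assumes colouring: "total_colouring V (E - {{u, v}}) 9 cv ce"
begin

definition ce\<^sub>0 :: "'a set \<Rightarrow> nat" where "ce\<^sub>0 = ce({u, v} := 0)"

definition free_at :: "'a \<Rightarrow> 'a set \<Rightarrow> nat \<Rightarrow> bool" where
  "free_at z e c \<longleftrightarrow> c \<in> {1..9} \<and> cv z \<noteq> c \<and> (\<forall>e'\<in>incident E z - {e}. ce\<^sub>0 e' \<noteq> c)"

lemma partial_colouring: "partial_total_colouring V E 9 {u, w} cv ce\<^sub>0"
  unfolding ce\<^sub>0_def by (rule partial_total_colouring_delete_edge[OF colouring]) simp

lemma ce\<^sub>0_range: "e \<in> E \<Longrightarrow> e \<noteq> {u, v} \<Longrightarrow> ce\<^sub>0 e \<in> {1..9}"
  using total_colouringD(2)[OF colouring] by (simp add: ce\<^sub>0_def)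

lemma ce\<^sub>0_uv [simp]: "ce\<^sub>0 {u, v} = 0"
  by (simp add: ce\<^sub>0_def)

lemma ce\<^sub>0_pos: "e \<in> E \<Longrightarrow> e \<noteq> {u, v} \<Longrightarrow> 0 < ce\<^sub>0 e"
  using ce\<^sub>0_range by fastforce

lemma ce\<^sub>0_distinct:
  "z \<in> V \<Longrightarrow> e \<in> incident E z \<Longrightarrow> e' \<in> incident E z \<Longrightarrow> e \<noteq> e' \<Longrightarrow> e \<noteq> {u, v} \<Longrightarrow> ce\<^sub>0 e \<noteq> ce\<^sub>0 e'"
proof -
  assume "z \<in> V" "e \<in> incident E z" "e' \<in> incident E z" "e \<noteq> e'" "e \<noteq> {u, v}"
  moreover then have "ce\<^sub>0 e \<noteq> 0" using ce\<^sub>0_range[of e] by simp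
  ultimately show "ce\<^sub>0 e \<noteq> ce\<^sub>0 e'" using partial_total_colouringD(4)[OF partial_colouring] by blast
qed

lemma ce\<^sub>0_absent:
  assumes "e \<in> E" "e \<noteq> {u, v}" "z \<in> e" "e' \<in> incident E z" "e' \<noteq> e"
  shows "ce\<^sub>0 e' \<noteq> ce\<^sub>0 e"
proof -
  have "z \<in> V" using simple_graph_edgeE[OF simple assms(1)] assms(3) by blast
  then show ?thesis using ce\<^sub>0_distinct[of z e e'] assms by auto
qed

lemma cv_ne_ce\<^sub>0: "z \<in> V \<Longrightarrow> z \<notin> {u, w} \<Longrightarrow> e \<in> incident E z \<Longrightarrow> cv z \<noteq> ce\<^sub>0 e"
  using partial_total_colouringD(5)[OF partial_colouring] by blast

lemma colourable_if_completed:
  assumes "partial_total_colouring V E 9 {u, w} cv ce'" "\<forall>e\<in>E. ce' e \<noteq> 0"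
  shows "total_colourable V E 9"
proof -
  have "degree V E w = 3" "degree V E u = 2"
    unfolding degree_def neighbours_w neighbours_u using distinct_vxy u'_ne_v by auto
  moreover have col: "partial_total_colouring V E 9 (insert w {u}) cv ce'"
    using assms(1) by (simp add: insert_commute)
  ultimately have "w \<notin> {u}" "2 * degree V E w < 9" using u_ne_w by auto
  then obtain c\<^sub>w where col': "partial_total_colouring V E 9 (insert u {}) (cv(w := c\<^sub>w)) ce'"
    by (rule partial_total_colouring_colour_vertex[OF simple col w_in_V]) simp
  have "u \<notin> {}" "2 * degree V E u < 9" using \<open>degree V E u = 2\<close> by auto
  then obtain c\<^sub>u where "partial_total_colouring V E 9 {} (cv(w := c\<^sub>w, u := c\<^sub>u)) ce'"
    by (rule partial_total_colouring_colour_vertex[OF simple col' u_in_V])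
  then show ?thesis
    using partial_total_colouring_complete[OF simple _ assms(2)] unfolding total_colourable_def by blast
qed

lemmas recolour = partial_total_colouring_colour_edge[where k = 9 and X = "{u, w}" and cv = cv]

lemma colourable_if_two_free_colours:
  assumes \<alpha>: "free_at v {u, v} \<alpha>" and \<mu>: "free_at u' {u, u'} \<mu>" and "\<mu> \<noteq> \<alpha>"
  shows "total_colourable V E 9"
proof -
  define c\<^sub>1 where "c\<^sub>1 = ce\<^sub>0({u, u'} := \<mu>)"
  define c\<^sub>2 where "c\<^sub>2 = c\<^sub>1({u, v} := \<alpha>)"
  have "partial_total_colouring V E 9 {u, w} cv c\<^sub>1"
    unfolding c\<^sub>1_def using \<mu> distinct_vertices
    by (intro recolour[OF partial_colouring]) (auto simp: free_at_def incident_u)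
  then have "partial_total_colouring V E 9 {u, w} cv c\<^sub>2"
    unfolding c\<^sub>2_def using \<alpha> \<open>\<mu> \<noteq> \<alpha>\<close> distinct_vertices
    by (intro recolour) (auto simp: free_at_def incident_u c\<^sub>1_def)
  moreover have "\<forall>e\<in>E. c\<^sub>2 e \<noteq> 0"
    using \<alpha> \<mu> unfolding free_at_def by (simp add: c\<^sub>1_def c\<^sub>2_def ce\<^sub>0_pos)
  ultimately show ?thesis by (rule colourable_if_completed)
qed

lemma colourable_if_vw_recolourable:
  assumes \<alpha>: "free_at v {u, v} \<alpha>" "free_at u' {u, u'} \<alpha>" and "u' \<noteq> w"
    and "ce\<^sub>0 {w, x} \<noteq> \<alpha>" "ce\<^sub>0 {w, y} \<noteq> \<alpha>"
  shows "total_colourable V E 9"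
proof -
  define \<beta> where "\<beta> = ce\<^sub>0 {v, w}"
  have vw: "{v, w} \<in> incident E v" "{v, w} \<noteq> {u, v}"
    using edges(1) distinct_vertices u_ne_w by (auto simp: doubleton_eq_iff)
  have \<beta>: "\<beta> \<in> {1..9}" "\<beta> \<noteq> \<alpha>" "cv v \<noteq> \<beta>"
    "\<And>e. e \<in> incident E v \<Longrightarrow> e \<noteq> {v, w} \<Longrightarrow> e \<noteq> {u, v} \<Longrightarrow> ce\<^sub>0 e \<noteq> \<beta>"
    using ce\<^sub>0_range[OF edges(1) vw(2)] \<alpha>(1) vw cv_ne_ce\<^sub>0[OF vertices(1) _ vw(1)]
      ce\<^sub>0_distinct[OF vertices(1) _ vw(1)] distinct_vertices
    unfolding \<beta>_def free_at_def by auto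
  define c\<^sub>1 where "c\<^sub>1 = ce\<^sub>0({v, w} := \<alpha>)"
  define c\<^sub>2 where "c\<^sub>2 = c\<^sub>1({u, u'} := \<alpha>)"
  define c\<^sub>3 where "c\<^sub>3 = c\<^sub>2({u, v} := \<beta>)"
  have "partial_total_colouring V E 9 {u, w} cv c\<^sub>1"
    unfolding c\<^sub>1_def using \<alpha> assms(4,5) distinct_vertices
    by (intro recolour[OF partial_colouring]) (auto simp: free_at_def incident_w)
  then have "partial_total_colouring V E 9 {u, w} cv c\<^sub>2"
    unfolding c\<^sub>2_def using \<alpha> \<open>u' \<noteq> w\<close> u_ne_w u'_ne_v distinct_vertices
    by (intro recolour) (auto simp: free_at_def incident_u c\<^sub>1_def doubleton_eq_iff)
  then have "partial_total_colouring V E 9 {u, w} cv c\<^sub>3"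
    unfolding c\<^sub>3_def using \<beta> \<open>u' \<noteq> w\<close> u_ne_w u'_ne_v distinct_vertices
    by (intro recolour) (auto simp: incident_u c\<^sub>1_def c\<^sub>2_def doubleton_eq_iff)
  moreover have "\<forall>e\<in>E. c\<^sub>3 e \<noteq> 0"
    using \<alpha> \<beta>(1) unfolding free_at_def by (simp add: c\<^sub>1_def c\<^sub>2_def c\<^sub>3_def ce\<^sub>0_pos)
  ultimately show ?thesis by (rule colourable_if_completed)
qed

end

locale wx_blocked = configuration_colouring +
  fixes \<alpha> :: nat
  assumes free_v: "free_at v {u, v} \<alpha>" and free_u': "free_at u' {u, u'} \<alpha>"
    and u'_ne_w: "u' \<noteq> w" and wx: "ce\<^sub>0 {w, x} = \<alpha>"
begin

definition \<epsilon> :: nat where "\<epsilon> = ce\<^sub>0 {v, x}"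

lemma u_ne_x: "u \<noteq> x" "u \<noteq> y"
  using u_ne_x_y u'_ne_w by auto

lemma u'_ne_x: "u' \<noteq> x"
  using free_u' wx edges(2) u_ne_w unfolding free_at_def by (auto simp: doubleton_eq_iff)

lemma ne_uv: "{v, x} \<noteq> {u, v}" "{v, y} \<noteq> {u, v}" "{w, x} \<noteq> {u, v}" "{w, y} \<noteq> {u, v}"
  using distinct_vertices u_ne_x u_ne_w by (auto simp: doubleton_eq_iff)

lemma \<alpha>_at_v: "e \<in> incident E v \<Longrightarrow> e \<noteq> {u, v} \<Longrightarrow> ce\<^sub>0 e \<noteq> \<alpha>"
  using free_v unfolding free_at_def by blast

lemma \<alpha>_at_x: "e \<in> incident E x \<Longrightarrow> e \<noteq> {w, x} \<Longrightarrow> ce\<^sub>0 e \<noteq> \<alpha>"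
  using ce\<^sub>0_absent[OF edges(2) ne_uv(3), of x e] wx by auto

lemma cv_x_ne_\<alpha>: "cv x \<noteq> \<alpha>"
  using cv_ne_ce\<^sub>0[of x "{w, x}"] distinct_vertices u_ne_x vertices edges wx by auto

lemma \<epsilon>: "\<epsilon> \<in> {1..9}" "\<epsilon> \<noteq> \<alpha>" "cv v \<noteq> \<epsilon>" "cv x \<noteq> \<epsilon>"
  using ce\<^sub>0_range[OF edge_vx ne_uv(1)] \<alpha>_at_v[of "{v, x}"] edge_vx ne_uv(1)
    cv_ne_ce\<^sub>0[OF vertices(1), of "{v, x}"] cv_ne_ce\<^sub>0[OF vertices(2), of "{v, x}"]
    distinct_vertices u_ne_x
  unfolding \<epsilon>_def by auto

lemma \<epsilon>_absent: "z \<in> {v, x} \<Longrightarrow> e \<in> incident E z \<Longrightarrow> e \<noteq> {v, x} \<Longrightarrow> ce\<^sub>0 e \<noteq> \<epsilon>"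
  using ce\<^sub>0_absent[OF edge_vx ne_uv(1)] unfolding \<epsilon>_def by blast

lemma colourable_if_vx_ne_wy:
  assumes "\<epsilon> \<noteq> ce\<^sub>0 {w, y}"
  shows "total_colourable V E 9"
proof -
  define c\<^sub>1 where "c\<^sub>1 = ce\<^sub>0({w, x} := 0)"
  define c\<^sub>2 where "c\<^sub>2 = c\<^sub>1({v, x} := \<alpha>)"
  define c\<^sub>3 where "c\<^sub>3 = c\<^sub>2({w, x} := \<epsilon>)"
  define c\<^sub>4 where "c\<^sub>4 = c\<^sub>3({u, u'} := \<alpha>)"
  define c\<^sub>5 where "c\<^sub>5 = c\<^sub>4({u, v} := \<epsilon>)"
  note c_defs = c\<^sub>1_def c\<^sub>2_def c\<^sub>3_def c\<^sub>4_def c\<^sub>5_def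
  have "partial_total_colouring V E 9 {u, w} cv c\<^sub>1"
    unfolding c\<^sub>1_def by (rule partial_total_colouring_uncolour_edge[OF partial_colouring])
  then have "partial_total_colouring V E 9 {u, w} cv c\<^sub>2"
    unfolding c\<^sub>2_def using free_v \<alpha>_at_x cv_x_ne_\<alpha> distinct_vertices
    by (intro recolour) (auto simp: free_at_def c_defs)
  then have "partial_total_colouring V E 9 {u, w} cv c\<^sub>3"
    unfolding c\<^sub>3_def using \<epsilon> \<epsilon>_absent[of v "{v, w}"] \<epsilon>_absent[of x] assms distinct_vertices edges(1)
    by (intro recolour) (auto simp: incident_w c_defs doubleton_eq_iff)
  then have "partial_total_colouring V E 9 {u, w} cv c\<^sub>4"
    unfolding c\<^sub>4_def using free_u' u_ne_x u'_ne_x u_ne_w u'_ne_v u'_ne_w distinct_vertices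
    by (intro recolour) (auto simp: free_at_def incident_u c_defs doubleton_eq_iff)
  then have "partial_total_colouring V E 9 {u, w} cv c\<^sub>5"
    unfolding c\<^sub>5_def using \<epsilon> \<epsilon>_absent[of v] u_ne_x u_ne_w distinct_vertices
    by (intro recolour) (auto simp: incident_u c_defs doubleton_eq_iff)
  moreover have "\<forall>e\<in>E. c\<^sub>5 e \<noteq> 0"
    using free_v \<epsilon>(1) unfolding free_at_def by (simp add: c_defs ce\<^sub>0_pos)
  ultimately show ?thesis by (rule colourable_if_completed)
qed

definition \<zeta> :: nat where "\<zeta> = ce\<^sub>0 {v, y}"

lemma \<zeta>: "\<zeta> \<in> {1..9}" "\<zeta> \<noteq> \<alpha>" "\<zeta> \<noteq> \<epsilon>" "cv v \<noteq> \<zeta>" "cv y \<noteq> \<zeta>"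
  using ce\<^sub>0_range[OF edge_vy ne_uv(2)] \<alpha>_at_v[of "{v, y}"] \<epsilon>_absent[of v "{v, y}"]
    cv_ne_ce\<^sub>0[OF vertices(1), of "{v, y}"] cv_ne_ce\<^sub>0[OF vertices(3), of "{v, y}"]
    edge_vy ne_uv(2) distinct_vertices u_ne_x
  unfolding \<zeta>_def by (auto simp: doubleton_eq_iff)

lemma \<zeta>_absent: "z \<in> {v, y} \<Longrightarrow> e \<in> incident E z \<Longrightarrow> e \<noteq> {v, y} \<Longrightarrow> ce\<^sub>0 e \<noteq> \<zeta>"
  using ce\<^sub>0_absent[OF edge_vy ne_uv(2)] unfolding \<zeta>_def by blast

lemma colourable_if_vx_eq_wy:
  assumes vx_wy: "\<epsilon> = ce\<^sub>0 {w, y}"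
  shows "total_colourable V E 9"
proof -
  have \<epsilon>_at_y: "cv y \<noteq> \<epsilon>" "\<And>e. e \<in> incident E y \<Longrightarrow> e \<noteq> {w, y} \<Longrightarrow> ce\<^sub>0 e \<noteq> \<epsilon>"
    using cv_ne_ce\<^sub>0[OF vertices(3), of "{w, y}"] ce\<^sub>0_absent[OF edges(3) ne_uv(4), of y]
      distinct_vertices u_ne_x edges(3) vx_wy by auto
  define c\<^sub>1 where "c\<^sub>1 = ce\<^sub>0({w, x} := 0, {w, y} := 0)"
  define c\<^sub>2 where "c\<^sub>2 = c\<^sub>1({v, x} := \<alpha>)"
  define c\<^sub>3 where "c\<^sub>3 = c\<^sub>2({v, y} := \<epsilon>)"
  define c\<^sub>4 where "c\<^sub>4 = c\<^sub>3({w, x} := \<epsilon>)"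
  define c\<^sub>5 where "c\<^sub>5 = c\<^sub>4({w, y} := \<zeta>)"
  define c\<^sub>6 where "c\<^sub>6 = c\<^sub>5({u, u'} := \<alpha>)"
  define c\<^sub>7 where "c\<^sub>7 = c\<^sub>6({u, v} := \<zeta>)"
  note c_defs = c\<^sub>1_def c\<^sub>2_def c\<^sub>3_def c\<^sub>4_def c\<^sub>5_def c\<^sub>6_def c\<^sub>7_def
  have "partial_total_colouring V E 9 {u, w} cv c\<^sub>1"
    unfolding c\<^sub>1_def
    by (intro partial_total_colouring_uncolour_edge[OF partial_total_colouring_uncolour_edge]
        partial_colouring)
  then have "partial_total_colouring V E 9 {u, w} cv c\<^sub>2"
    unfolding c\<^sub>2_def using free_v \<alpha>_at_x cv_x_ne_\<alpha> distinct_vertices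
    by (intro recolour) (auto simp: free_at_def c_defs)
  then have "partial_total_colouring V E 9 {u, w} cv c\<^sub>3"
    unfolding c\<^sub>3_def using \<epsilon> \<epsilon>_absent \<epsilon>_at_y distinct_vertices
    by (intro recolour) (auto simp: c_defs)
  then have "partial_total_colouring V E 9 {u, w} cv c\<^sub>4"
    unfolding c\<^sub>4_def using \<epsilon> \<epsilon>_absent[of v "{v, w}"] \<epsilon>_absent[of x] distinct_vertices edges(1)
    by (intro recolour) (auto simp: incident_w c_defs doubleton_eq_iff)
  then have "partial_total_colouring V E 9 {u, w} cv c\<^sub>5"
    unfolding c\<^sub>5_def using \<zeta> \<zeta>_absent[of v "{v, w}"] \<zeta>_absent[of y] distinct_vertices edges(1)
    by (intro recolour) (auto simp: incident_w c_defs doubleton_eq_iff)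
  then have "partial_total_colouring V E 9 {u, w} cv c\<^sub>6"
    unfolding c\<^sub>6_def using free_u' \<epsilon> \<zeta> u_ne_x u'_ne_x u_ne_w u'_ne_v u'_ne_w distinct_vertices
    by (intro recolour) (auto simp: free_at_def incident_u c_defs doubleton_eq_iff)
  then have "partial_total_colouring V E 9 {u, w} cv c\<^sub>7"
    unfolding c\<^sub>7_def using \<zeta> \<zeta>_absent[of v] u_ne_x u_ne_w distinct_vertices
    by (intro recolour) (auto simp: incident_u c_defs doubleton_eq_iff)
  moreover have "\<forall>e\<in>E. c\<^sub>7 e \<noteq> 0"
    using free_v \<epsilon>(1) \<zeta>(1) unfolding free_at_def by (simp add: c_defs ce\<^sub>0_pos)
  ultimately show ?thesis by (rule colourable_if_completed)
qed

end

context configuration_colouring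
begin

lemma free_colour_exists:
  assumes "e \<in> incident E z" "finite A" "card (incident E z) + card A \<le> 8"
  obtains c where "free_at z e c" "c \<notin> A"
proof -
  let ?S = "insert (cv z) (ce\<^sub>0 ` (incident E z - {e})) \<union> A"
  have fin: "finite (incident E z)" by (rule finite_incident[OF simple])
  have "card ?S \<le> card (insert (cv z) (ce\<^sub>0 ` (incident E z - {e}))) + card A" by (rule card_Un_le)
  also have "\<dots> \<le> Suc (card (ce\<^sub>0 ` (incident E z - {e}))) + card A"
    using card_insert_le_m1 fin by (simp add: card_insert_if)
  also have "\<dots> \<le> Suc (card (incident E z - {e})) + card A"
    using card_image_le[of "incident E z - {e}" ce\<^sub>0] fin by simp
  also have "\<dots> < card {1..9::nat}"
  proof -
    have "0 < card (incident E z)" using assms(1) fin card_gt_0_iff by blast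
    then show ?thesis using assms(1,3) fin by (simp add: card_Diff_singleton)
  qed
  finally have "\<not> {1..9} \<subseteq> ?S"
    using card_mono[of ?S "{1..9::nat}"] fin assms(2) by auto
  then show ?thesis using that unfolding free_at_def by blast
qed

lemma colourable_if_unique_free_colour:
  assumes \<alpha>: "free_at v {u, v} \<alpha>" "free_at u' {u, u'} \<alpha>"
    and unique: "\<And>\<mu>. free_at u' {u, u'} \<mu> \<Longrightarrow> \<mu> = \<alpha>"
  shows "total_colourable V E 9"
proof -
  have "u' \<noteq> w"
  proof
    assume "u' = w"
    then have "card (incident E u') + card {\<alpha>} \<le> 8"
      using incident_w card_insert_le_m1[of 3 "{{w, x}, {w, y}}" "{v, w}"] by (simp add: card_insert_if)
    then obtain \<nu> where "free_at u' {u, u'} \<nu>" "\<nu> \<notin> {\<alpha>}"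
      using free_colour_exists[of "{u, u'}" u' "{\<alpha>}"] edges(5) by auto
    with unique show False by blast
  qed
  consider "ce\<^sub>0 {w, x} = \<alpha>" | "ce\<^sub>0 {w, y} = \<alpha>" | "ce\<^sub>0 {w, x} \<noteq> \<alpha>" "ce\<^sub>0 {w, y} \<noteq> \<alpha>"
    by blast
  then show ?thesis
  proof cases
    case 1
    then interpret wx_blocked V E v w x y u u' cv ce \<alpha>
      using \<alpha> \<open>u' \<noteq> w\<close> by unfold_locales
    show ?thesis using colourable_if_vx_ne_wy colourable_if_vx_eq_wy by blast
  next
    case 2
    then have "wx_blocked V E v w y x u u' cv ce \<alpha>"
      using swap_xy colouring \<alpha> \<open>u' \<noteq> w\<close>
      unfolding wx_blocked_def wx_blocked_axioms_def configuration_colouring_def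
        configuration_colouring_axioms_def by blast
    then show ?thesis using wx_blocked.colourable_if_vx_ne_wy wx_blocked.colourable_if_vx_eq_wy by metis
  next
    case 3
    then show ?thesis by (rule colourable_if_vw_recolourable[OF \<alpha> \<open>u' \<noteq> w\<close>])
  qed
qed

lemma total_colourable: "total_colourable V E 9"
proof -
  have incident_le_8: "card (incident E z) \<le> 8" if "z \<in> V" for z
    using card_incident_le_degree[OF simple, of z] max_degree that unfolding max_degree_le_def
    by (meson le_trans)
  obtain \<alpha> where \<alpha>: "free_at v {u, v} \<alpha>"
    using free_colour_exists[of "{u, v}" v "{}"] edges(4) incident_le_8[OF vertices(1)] by auto
  obtain \<mu> where \<mu>: "free_at u' {u, u'} \<mu>"
    using free_colour_exists[of "{u, u'}" u' "{}"] edges(5) incident_le_8[OF vertices(4)] by auto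
  show ?thesis
  proof (cases "\<exists>\<nu>. free_at u' {u, u'} \<nu> \<and> \<nu> \<noteq> \<alpha>")
    case True
    then show ?thesis using colourable_if_two_free_colours \<alpha> by blast
  next
    case False
    then show ?thesis using colourable_if_unique_free_colour[OF \<alpha>] \<mu> by blast
  qed
qed

end

section \<open>Two triangles at a vertex of degree 3\<close>

lemma face_on_edge:
  assumes "simple_graph V E" "rotation_system V E rot" "f \<in> faces V E rot" "edge_on_face v w f"
  shows "f = orbit (face_step rot) (v, w) \<or> f = orbit (face_step rot) (w, v)"
proof -
  interpret finite_injection "darts V E" "face_step rot"
    using assms(1,2) by (rule finite_injection_face_step)
  obtain d where d: "d \<in> darts V E" "f = orbit (face_step rot) d"
    using assms(3) faces_eq_orbits[OF assms(1,2)] by auto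
  then show ?thesis using assms(4) orbit_eq[OF d(1)] unfolding edge_on_face_def by metis
qed

lemma triangular_face:
  assumes simple: "simple_graph V E" and rotation: "rotation_system V E rot"
    and d: "(a, b) \<in> darts V E" and tri: "card (orbit (face_step rot) (a, b)) = 3"
  shows "rot b a \<in> neighbours V E a" "rot a (rot b a) = b"
proof -
  interpret finite_injection "darts V E" "face_step rot"
    using simple rotation by (rule finite_injection_face_step)
  have "funpow_dist1 (face_step rot) (a, b) (a, b) = 3" using card_orbit[OF d] tri by simp
  then have "(face_step rot ^^ 3) (a, b) = (a, b)"
    using funpow_dist1_prop[OF self_in_orbit[OF d]] by metis
  then have "rot (rot b a) b = a \<and> rot a (rot b a) = b"
    by (auto simp: numeral_3_eq_3 face_step_def)
  moreover have "(face_step rot ^^ 2) (a, b) \<in> darts V E" by (rule funpow_in[OF d])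
  ultimately show "rot b a \<in> neighbours V E a" "rot a (rot b a) = b"
    by (auto simp: numeral_2_eq_2 face_step_def dart_iff_neighbour)
qed

lemma degree_3_two_triangles:
  assumes simple: "simple_graph V E" and rotation: "rotation_system V E rot"
    and deg: "degree V E w = 3" and vw: "{v, w} \<in> E"
    and faces: "f\<^sub>1 \<in> faces V E rot" "f\<^sub>2 \<in> faces V E rot" "f\<^sub>1 \<noteq> f\<^sub>2" "card f\<^sub>1 = 3" "card f\<^sub>2 = 3"
    and on_faces: "edge_on_face v w f\<^sub>1" "edge_on_face v w f\<^sub>2"
  obtains x y where "neighbours V E w = {v, x, y}" "distinct [v, x, y]" "{v, x} \<in> E" "{v, y} \<in> E"
proof -
  let ?\<sigma> = "face_step rot"
  define x where "x = rot w v"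
  define y where "y = rot v w"
  have V: "v \<in> V" "w \<in> V" using edge_vertices[OF simple vw] by auto
  have darts: "(v, w) \<in> darts V E" "(w, v) \<in> darts V E"
    using vw edge_vertices[OF simple vw] by (auto simp: mem_darts_iff insert_commute)
  have N: "v \<in> neighbours V E w" "w \<in> neighbours V E v"
    using edge_imp_neighbour[OF simple vw] neighbour_sym[OF simple] by blast+
  have "card (orbit ?\<sigma> (v, w)) = 3" "card (orbit ?\<sigma> (w, v)) = 3"
    using face_on_edge[OF simple rotation faces(1) on_faces(1)]
      face_on_edge[OF simple rotation faces(2) on_faces(2)] faces(3-5) by auto
  then have x: "x \<in> neighbours V E v" and y: "y \<in> neighbours V E w" "rot w y = v"
    using triangular_face[OF simple rotation darts(1)] triangular_face[OF simple rotation darts(2)]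
    unfolding x_def y_def by simp_all
  have x': "x \<in> neighbours V E w" and y': "y \<in> neighbours V E v"
    using rotation_in_neighbours[OF rotation] V N unfolding x_def y_def by simp_all
  have "x \<noteq> y"
  proof
    assume "x = y"
    then have "neighbours V E w \<subseteq> {v, x}"
      using rotation_2_cycle_imp_two_neighbours[OF rotation V(2) N(1)] y(2) unfolding x_def by simp
    then have "card (neighbours V E w) \<le> card {v, x}" by (rule card_mono[rotated]) simp
    also have "\<dots> \<le> 2" by (simp add: card_insert_if)
    finally show False using deg unfolding degree_def by simp
  qed
  moreover have "x \<noteq> v" "y \<noteq> v" using x y' by (auto simp: mem_neighbours_iff)
  ultimately have "distinct [v, x, y]" by auto
  moreover have "neighbours V E w = {v, x, y}"
  proof (rule card_subset_eq[OF finite_neighbours[OF simple], symmetric])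
    show "{v, x, y} \<subseteq> neighbours V E w" using N(1) x' y(1) by simp
    show "card {v, x, y} = card (neighbours V E w)"
      using \<open>distinct [v, x, y]\<close> deg unfolding degree_def by simp
  qed
  moreover have "{v, x} \<in> E" "{v, y} \<in> E" using x y' by (simp_all add: mem_neighbours_iff)
  ultimately show ?thesis using that by blast
qed

theorem lemma2p7:
  fixes V :: "'a set" and E :: "'a set set" and rot :: "'a \<Rightarrow> 'a \<Rightarrow> 'a"
    and v w :: 'a and f1 f2 :: "('a \<times> 'a) set"
  assumes "minimal_counterexample V E"
    and "plane_rotation V E rot"
    and "v \<in> V" and "degree V E v = 8"
    and "w \<in> V" and "degree V E w = 3" and "{v, w} \<in> E"
    and "f1 \<in> faces V E rot" and "f2 \<in> faces V E rot" and "f1 \<noteq> f2"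
    and "card f1 = 3" and "card f2 = 3"
    and "edge_on_face v w f1" and "edge_on_face v w f2"
  shows "\<forall>u \<in> neighbours V E v. degree V E u \<noteq> 2"
proof (intro ballI notI)
  fix u assume u: "u \<in> neighbours V E v" "degree V E u = 2"
  have simple: "simple_graph V E" and max_degree: "max_degree_le V E 8"
    and not_colourable: "\<not> total_colourable V E 9"
    using assms(1) unfolding minimal_counterexample_def max_degree_eq_def by auto
  have rotation: "rotation_system V E rot" using assms(2) unfolding plane_rotation_def by simp
  obtain x y where w: "neighbours V E w = {v, x, y}" "distinct [v, x, y]" "{v, x} \<in> E" "{v, y} \<in> E"
    using degree_3_two_triangles[OF simple rotation assms(6-14)] .
  have "v \<in> neighbours V E u" using neighbour_sym[OF simple u(1)] .
  then obtain u' where u': "neighbours V E u = {v, u'}" "u' \<noteq> v"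
    using u(2) unfolding degree_def
    by (metis card_2_iff doubleton_eq_iff insert_absorb insert_iff)
  have "total_colourable V (E - {{u, v}}) 9"
    using minimal_counterexample_delete_edge_colourable[OF assms(1)] u(1)
    by (simp add: mem_neighbours_iff insert_commute)
  then obtain cv ce where "total_colouring V (E - {{u, v}}) 9 cv ce"
    unfolding total_colourable_def by blast
  then interpret configuration_colouring V E v w x y u u' cv ce
    using simple max_degree w u' u(1) u(2) assms(5,6)
    by unfold_locales (auto simp: mem_neighbours_iff)
  show False using total_colourable not_colourable by blast
qed

end
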